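(* Let $d\ge2$, let $\theta_{\mathbf q}$ ($\mathbf q\in(\mathbb Z_d^2)^*$) be real numbers with $e^{i\theta_{\bar{\mathbf q}}}=s_{-\mathbf q}e^{-i\theta_{\mathbf q}}$, and let $\hat B=\frac{1}{\sqrt{d+1}}\sum_{\mathbf q\in(\mathbb Z_d^2)^*}e^{i\theta_{\mathbf q}}\hat D_{\mathbf q}$. Then $$\sum_{\substack{\mathbf p,\mathbf q\in\mathbb Z_d^2\\ \mathbf p,\mathbf q,\mathbf p\oplus\mathbf q\in(\mathbb Z_d^2)^*}} s_{\mathbf p+\mathbf q}\,\tau^{\langle\mathbf p,\mathbf q\rangle}\,e^{i(\theta_{\mathbf p}+\theta_{\mathbf q}-\theta_{\mathbf p\oplus\mathbf q})}\;\le\;(d-1)(d-2)(d+1)^{3/2}$$ (the left side being real), with equality if and only if $\frac1d(1+\hat B)$ is a rank-one projector, i.e. if and only if the operators $\hat E_{\mathbf p}=\frac{1}{d^2}(1+\hat D_{\mathbf p}\hat B\hat D_{\mathbf p}^\dagger)$, $\mathbf p\in\mathbb Z_d^2$, form a rank-one symmetric informationally complete POVM.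
   Context: Weyl–Heisenberg notation: orthonormal basis $|0\rangle,\dots,|d-1\rangle$ of $\mathbb C^d$, $\tau=-e^{\pi i/d}$, $\hat T|r\rangle=\tau^{2r}|r\rangle$, $\hat S|r\rangle=|r+1\bmod d\rangle$, $\hat D_{\mathbf p}=\tau^{p_1p_2}\hat S^{p_1}\hat T^{p_2}$ for $\mathbf p=(p_1,p_2)\in\mathbb Z^2$; $\langle\mathbf p,\mathbf q\rangle=p_2q_1-p_1q_2$; $\mathbb Z_d^2=\{0,\dots,d-1\}^2$, $(\mathbb Z_d^2)^*=\mathbb Z_d^2\setminus\{(0,0)\}$; $[\mathbf p]$ is the reduction of $\mathbf p$ mod $d$ into $\mathbb Z_d^2$, $\mathbf p\oplus\mathbf q=[\mathbf p+\mathbf q]$, $\bar{\mathbf p}=[-\mathbf p]$; $s_{\mathbf p}=1$ if $d$ odd and $s_{\mathbf p}=(-1)^{\langle\mathbf p,[\mathbf p]\rangle/d}$ if $d$ even. A rank-one symmetric informationally complete POVM is one whose $d^2$ elements are $\frac1d\hat P_r$ with rank-one projectors $\hat P_r$ satisfying $\operatorname{Tr}(\hat P_r\hat P_s)=\frac{1}{d+1}$ for $r\ne s$. *)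

theory Defs
  imports Complex_Main "Jordan_Normal_Form.Schur_Decomposition" "Jordan_Normal_Form.DL_Rank"
begin

definition tau :: "nat \<Rightarrow> complex" where
  "tau d = - exp (\<i> * complex_of_real (pi / real d))"

definition Zd2 :: "nat \<Rightarrow> (int \<times> int) set" where
  "Zd2 d = {0..<int d} \<times> {0..<int d}"

definition Zd2star :: "nat \<Rightarrow> (int \<times> int) set" where
  "Zd2star d = Zd2 d - {(0,0)}"

definition red :: "nat \<Rightarrow> int \<times> int \<Rightarrow> int \<times> int" where
  "red d p = (fst p mod int d, snd p mod int d)"

definition oplus :: "nat \<Rightarrow> int \<times> int \<Rightarrow> int \<times> int \<Rightarrow> int \<times> int" where
  "oplus d p q = red d (fst p + fst q, snd p + snd q)"

definition bar :: "nat \<Rightarrow> int \<times> int \<Rightarrow> int \<times> int" where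
  "bar d p = red d (- fst p, - snd p)"

definition symp :: "int \<times> int \<Rightarrow> int \<times> int \<Rightarrow> int" where
  "symp p q = snd p * fst q - fst p * snd q"

definition sgn_s :: "nat \<Rightarrow> int \<times> int \<Rightarrow> complex" where
  "sgn_s d p = (if odd d then 1 else (-1) powi (symp p (red d p) div int d))"

(* displacement operator D_p = tau^(p1 p2) S^p1 T^p2 written as a d x d matrix in the
   basis |0>,...,|d-1>:  S^p1 T^p2 |j> = tau^(2 j p2) |(j + p1) mod d>  *)
definition displ :: "nat \<Rightarrow> int \<times> int \<Rightarrow> complex mat" where
  "displ d p = mat d d (\<lambda>(i,j). if int i = (int j + fst p) mod int d
       then tau d powi (fst p * snd p) * tau d powi (2 * int j * snd p) else 0)"

definition msum :: "nat \<Rightarrow> ('i \<Rightarrow> complex mat) \<Rightarrow> 'i set \<Rightarrow> complex mat" where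
  "msum d f A = mat d d (\<lambda>ij. \<Sum>a\<in>A. f a $$ ij)"

definition mat_trace :: "complex mat \<Rightarrow> complex" where
  "mat_trace A = (\<Sum>i<dim_row A. A $$ (i,i))"

definition rank_one_projector :: "nat \<Rightarrow> complex mat \<Rightarrow> bool" where
  "rank_one_projector d P \<longleftrightarrow> P \<in> carrier_mat d d \<and> P * P = P \<and> mat_adjoint P = P
     \<and> vec_space.rank d P = 1"

definition rank_one_sic_povm :: "nat \<Rightarrow> (int \<times> int \<Rightarrow> complex mat) \<Rightarrow> bool" where
  "rank_one_sic_povm d E \<longleftrightarrow>
     (\<exists>P. (\<forall>r\<in>Zd2 d. rank_one_projector d (P r) \<and> E r = (1 / of_nat d) \<cdot>\<^sub>m P r)
        \<and> (\<forall>r\<in>Zd2 d. \<forall>s\<in>Zd2 d. r \<noteq> s \<longrightarrow> mat_trace (P r * P s) = 1 / of_nat (d + 1)))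
     \<and> msum d E (Zd2 d) = 1\<^sub>m d"

definition Bop :: "nat \<Rightarrow> (int \<times> int \<Rightarrow> real) \<Rightarrow> complex mat" where
  "Bop d theta = (1 / complex_of_real (sqrt (real d + 1))) \<cdot>\<^sub>m
     msum d (\<lambda>q. exp (\<i> * complex_of_real (theta q)) \<cdot>\<^sub>m displ d q) (Zd2star d)"

definition Eop :: "nat \<Rightarrow> (int \<times> int \<Rightarrow> real) \<Rightarrow> int \<times> int \<Rightarrow> complex mat" where
  "Eop d theta p = (1 / of_nat (d^2)) \<cdot>\<^sub>m
     (1\<^sub>m d + displ d p * Bop d theta * mat_adjoint (displ d p))"

end

theory Submission
  imports Defs "HOL-Analysis.Convex" "Jordan_Normal_Form.DL_Rank_Submatrix"
begin

text \<open>The symmetry condition on \<open>\<theta>\<close> makes \<open>B\<close>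
  Hermitian, the orthogonality \<open>tr (D\<^sub>p D\<^sub>q\<^sup>\<dagger>) = d \<delta>\<^sub>p\<^sub>q\<close> gives \<open>tr B = 0\<close> and \<open>tr B\<^sup>2 = d (d - 1)\<close>,
  and the multiplication law \<open>D\<^sub>p D\<^sub>q = \<tau>\<^sup>\<langle>\<^sup>p\<^sup>,\<^sup>q\<^sup>\<rangle> s\<^sub>p\<^sub>+\<^sub>q D\<^sub>p\<^sub>\<oplus>\<^sub>q\<close> turns \<open>tr B\<^sup>3\<close> into
  \<open>d (d+1)\<^sup>-\<^sup>3\<^sup>/\<^sup>2\<close> times the sum in question.
  For the Hermitian matrix \<open>X = 1 + B\<close>, with \<open>tr X\<^sup>2 = d\<^sup>2\<close>, the squared Hilbert--Schmidt norm of
  \<open>X\<^sup>2 - d X\<close> is non-negative and \<open>\<parallel>X\<^sup>2\<parallel> \<le> \<parallel>X\<parallel>\<^sup>2\<close>; together they give \<open>tr X\<^sup>3 \<le> d\<^sup>3\<close>, which is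
  the bound, with equality iff \<open>X\<^sup>2 = d X\<close>, that is, iff \<open>X / d\<close> is a projector of trace one and
  hence of rank one. Its displacements \<open>D\<^sub>p (X / d) D\<^sub>p\<^sup>\<dagger>\<close> are then rank-one projectors, and both their
  pairwise traces and the sum \<open>\<Sum>\<^sub>p D\<^sub>p B D\<^sub>p\<^sup>\<dagger>\<close> reduce to character sums over \<open>\<int>\<^sub>d\<^sup>2\<close>, which
  yields the SIC-POVM. Conversely, \<open>E\<^sub>0 = (X / d) / d\<close>, so if the \<open>E\<^sub>p\<close> form a rank-one
  SIC-POVM then \<open>X / d\<close> is a rank-one projector.\<close>

section \<open>Matrices: adjoint, trace and Hilbert--Schmidt norm\<close>

lemma index_mult_mat_sum:
  assumes "A \<in> carrier_mat n m" "B \<in> carrier_mat m k" "i < n" "j < k"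
  shows "(A * B) $$ (i,j) = (\<Sum>l<m. A $$ (i,l) * B $$ (l,j))"
  using assms by (simp add: scalar_prod_def atLeast0LessThan)

lemma mat_adjoint_dim [simp]:
  "dim_row (mat_adjoint A) = dim_col A" "dim_col (mat_adjoint A) = dim_row A"
  by (simp_all add: mat_adjoint_def)

lemma mat_adjoint_index [simp]:
  "i < dim_col A \<Longrightarrow> j < dim_row A \<Longrightarrow> mat_adjoint A $$ (i,j) = conjugate (A $$ (j,i))"
  by (simp add: mat_adjoint_def mat_of_rows_index)

lemma mat_adjoint_carrier [simp]: "A \<in> carrier_mat n m \<Longrightarrow> mat_adjoint A \<in> carrier_mat m n"
  unfolding carrier_mat_def by simp

lemma mat_adjoint_adjoint [simp]: "mat_adjoint (mat_adjoint A) = A"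
  by (rule eq_matI) simp_all

lemma mat_adjoint_mult:
  fixes A B :: "'a :: conjugatable_field mat"
  assumes "A \<in> carrier_mat n m" "B \<in> carrier_mat m k"
  shows "mat_adjoint (A * B) = mat_adjoint B * mat_adjoint A"
proof (rule eq_matI)
  fix i j assume "i < dim_row (mat_adjoint B * mat_adjoint A)" "j < dim_col (mat_adjoint B * mat_adjoint A)"
  with assms have i: "i < k" and j: "j < n" by auto
  have "mat_adjoint (A * B) $$ (i,j) = conjugate (\<Sum>l<m. A $$ (j,l) * B $$ (l,i))"
    using assms i j by (simp add: index_mult_mat_sum[of _ n m _ k] del: index_mult_mat(1))
  also have "\<dots> = (\<Sum>l<m. conjugate (B $$ (l,i)) * conjugate (A $$ (j,l)))"
    by (simp add: sum_conjugate conjugate_dist_mul mult.commute)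
  also have "\<dots> = (mat_adjoint B * mat_adjoint A) $$ (i,j)"
    using assms i j by (simp add: index_mult_mat_sum[of _ k m _ n] del: index_mult_mat(1))
  finally show "mat_adjoint (A * B) $$ (i,j) = (mat_adjoint B * mat_adjoint A) $$ (i,j)" .
qed (use assms in auto)

lemma mat_adjoint_add:
  fixes A B :: "'a :: conjugatable_field mat"
  assumes "A \<in> carrier_mat n m" "B \<in> carrier_mat n m"
  shows "mat_adjoint (A + B) = mat_adjoint A + mat_adjoint B"
  by (rule eq_matI) (use assms in \<open>auto simp: conjugate_dist_add\<close>)

lemma mat_adjoint_smult: "mat_adjoint (c \<cdot>\<^sub>m A) = conjugate c \<cdot>\<^sub>m mat_adjoint A"
  by (rule eq_matI) (auto simp: conjugate_dist_mul)

lemma mat_adjoint_one [simp]: "mat_adjoint (1\<^sub>m n :: complex mat) = 1\<^sub>m n"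
  by (rule eq_matI) auto

lemma smult_smult_mat: "a \<cdot>\<^sub>m (b \<cdot>\<^sub>m A) = (a * b) \<cdot>\<^sub>m (A :: 'a :: semigroup_mult mat)"
  by (rule eq_matI) (auto simp: mult.assoc)

lemma one_smult_mat [simp]: "(1 :: 'a :: monoid_mult) \<cdot>\<^sub>m A = A"
  by (rule eq_matI) auto

lemma smult_mult_smult_mat:
  fixes A B :: "'a :: comm_ring mat"
  assumes "A \<in> carrier_mat n m" "B \<in> carrier_mat m k"
  shows "(a \<cdot>\<^sub>m A) * (b \<cdot>\<^sub>m B) = (a * b) \<cdot>\<^sub>m (A * B)"
  using assms by (simp add: mult_smult_assoc_mat[of _ n m _ k] mult_smult_distrib[of _ n m _ k]
      smult_smult_mat mult.commute)

lemma hermitian_cnj_index: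
  fixes P :: "complex mat"
  assumes "P \<in> carrier_mat n n" "mat_adjoint P = P" "i < n" "j < n"
  shows "cnj (P $$ (i,j)) = P $$ (j,i)"
  using assms mat_adjoint_index[of j P i] by simp

lemma mat_trace_mult_comm:
  fixes A B :: "complex mat"
  assumes "A \<in> carrier_mat n m" "B \<in> carrier_mat m n"
  shows "mat_trace (A * B) = mat_trace (B * A)"
proof -
  have "mat_trace (A * B) = (\<Sum>i<n. \<Sum>l<m. A $$ (i,l) * B $$ (l,i))"
    using assms unfolding mat_trace_def
    by (intro sum.cong) (auto simp: index_mult_mat_sum[of _ n m _ n] simp del: index_mult_mat(1))
  also have "\<dots> = (\<Sum>l<m. \<Sum>i<n. B $$ (l,i) * A $$ (i,l))"
    by (subst sum.swap) (simp add: mult.commute)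
  also have "\<dots> = mat_trace (B * A)"
    using assms unfolding mat_trace_def
    by (intro sum.cong) (auto simp: index_mult_mat_sum[of _ m n _ m] simp del: index_mult_mat(1))
  finally show ?thesis .
qed

lemma mat_trace_add:
  "A \<in> carrier_mat n n \<Longrightarrow> B \<in> carrier_mat n n \<Longrightarrow> mat_trace (A + B) = mat_trace A + mat_trace B"
  by (simp add: mat_trace_def sum.distrib)

lemma mat_trace_smult: "A \<in> carrier_mat n n \<Longrightarrow> mat_trace (c \<cdot>\<^sub>m A) = c * mat_trace A"
  by (simp add: mat_trace_def sum_distrib_left)

lemma mat_trace_one [simp]: "mat_trace (1\<^sub>m n) = of_nat n"
  by (simp add: mat_trace_def)

lemma mat_trace_adjoint: "A \<in> carrier_mat n n \<Longrightarrow> mat_trace (mat_adjoint A) = cnj (mat_trace A)"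
  by (simp add: mat_trace_def)

lemma Im_mat_trace_cube_hermitian:
  fixes A :: "complex mat"
  assumes A: "A \<in> carrier_mat n n" and herm: "mat_adjoint A = A"
  shows "Im (mat_trace (A * A * A)) = 0"
proof -
  have "mat_adjoint (A * A) = A * A"
    using A herm mat_adjoint_mult[OF A A] by simp
  then have "mat_adjoint (A * A * A) = A * (A * A)"
    using A herm mat_adjoint_mult[of "A * A" n n A n] by simp
  then have "mat_adjoint (A * A * A) = A * A * A"
    using A by (simp add: assoc_mult_mat[of _ n n _ n _ n])
  then have "cnj (mat_trace (A * A * A)) = mat_trace (A * A * A)"
    using A mat_trace_adjoint[of "A * A * A" n] by simp
  then show ?thesis by (simp add: complex_eq_iff)
qed

lemma mat_trace_unitary_conj:
  fixes U P :: "complex mat"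
  assumes "U \<in> carrier_mat n n" "P \<in> carrier_mat n n" "mat_adjoint U * U = 1\<^sub>m n"
  shows "mat_trace (U * P * mat_adjoint U) = mat_trace P"
proof -
  have "mat_trace (U * P * mat_adjoint U) = mat_trace (U * (P * mat_adjoint U))"
    using assms by (simp add: assoc_mult_mat[of _ n n _ n _ n])
  also have "\<dots> = mat_trace (P * mat_adjoint U * U)"
    using assms by (intro mat_trace_mult_comm) auto
  also have "P * mat_adjoint U * U = P"
    using assms by (simp add: assoc_mult_mat[of _ n n _ n _ n])
  finally show ?thesis .
qed

lemma unitary_conj_mult:
  fixes U P Q :: "complex mat"
  assumes "U \<in> carrier_mat n n" "P \<in> carrier_mat n n" "Q \<in> carrier_mat n n"
    and "mat_adjoint U * U = 1\<^sub>m n"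
  shows "(U * P * mat_adjoint U) * (U * Q * mat_adjoint U) = U * (P * Q) * mat_adjoint U"
proof -
  have "(U * P * mat_adjoint U) * (U * Q * mat_adjoint U)
      = U * (P * (mat_adjoint U * (U * (Q * mat_adjoint U))))"
    using assms by (simp add: assoc_mult_mat[of _ n n _ n _ n])
  also have "mat_adjoint U * (U * (Q * mat_adjoint U)) = (mat_adjoint U * U) * (Q * mat_adjoint U)"
    by (rule assoc_mult_mat[symmetric]) (use assms in auto)
  also have "\<dots> = Q * mat_adjoint U"
    using assms by simp
  also have "U * (P * (Q * mat_adjoint U)) = U * (P * Q) * mat_adjoint U"
    using assms by (simp add: assoc_mult_mat[of _ n n _ n _ n])
  finally show ?thesis .
qed

lemma unitary_conj_adjoint:
  fixes U P :: "complex mat"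
  assumes "U \<in> carrier_mat n n" "P \<in> carrier_mat n n"
  shows "mat_adjoint (U * P * mat_adjoint U) = U * mat_adjoint P * mat_adjoint U"
proof -
  have "mat_adjoint (U * P * mat_adjoint U) = U * mat_adjoint (U * P)"
    using assms by (simp add: mat_adjoint_mult[of _ n n _ n])
  also have "mat_adjoint (U * P) = mat_adjoint P * mat_adjoint U"
    using assms by (rule mat_adjoint_mult)
  also have "U * (mat_adjoint P * mat_adjoint U) = U * mat_adjoint P * mat_adjoint U"
    by (rule assoc_mult_mat[symmetric]) (use assms in auto)
  finally show ?thesis .
qed


definition frobenius_norm_sq :: "nat \<Rightarrow> complex mat \<Rightarrow> real" where
  "frobenius_norm_sq n A = (\<Sum>i<n. \<Sum>j<n. (cmod (A $$ (i,j)))\<^sup>2)"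

lemma frobenius_norm_sq_nonneg: "0 \<le> frobenius_norm_sq n A"
  unfolding frobenius_norm_sq_def by (intro sum_nonneg) auto

lemma of_real_frobenius_norm_sq:
  "of_real (frobenius_norm_sq n A) = (\<Sum>i<n. \<Sum>j<n. A $$ (i,j) * cnj (A $$ (i,j)))"
  by (simp only: frobenius_norm_sq_def of_real_sum complex_norm_square)

lemma mat_trace_adjoint_mult_self:
  assumes "A \<in> carrier_mat n n"
  shows "mat_trace (mat_adjoint A * A) = of_real (frobenius_norm_sq n A)"
proof -
  have "mat_trace (mat_adjoint A * A) = (\<Sum>j<n. \<Sum>i<n. cnj (A $$ (i,j)) * A $$ (i,j))"
    unfolding mat_trace_def using assms
    by (intro sum.cong) (auto simp: index_mult_mat_sum[of _ n n _ n] simp del: index_mult_mat(1))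
  also have "\<dots> = of_real (frobenius_norm_sq n A)"
    by (subst sum.swap) (simp add: of_real_frobenius_norm_sq mult.commute)
  finally show ?thesis .
qed

lemma frobenius_norm_sq_eq_0_iff:
  assumes "A \<in> carrier_mat n n"
  shows "frobenius_norm_sq n A = 0 \<longleftrightarrow> A = 0\<^sub>m n n"
proof
  assume "frobenius_norm_sq n A = 0"
  then have "\<forall>i<n. \<forall>j<n. (cmod (A $$ (i,j)))\<^sup>2 = 0"
    unfolding frobenius_norm_sq_def by (simp add: sum_nonneg_eq_0_iff sum_nonneg)
  then show "A = 0\<^sub>m n n" using assms by (intro eq_matI) auto
qed (simp add: frobenius_norm_sq_def)

lemma frobenius_norm_sq_mult_le:
  assumes "A \<in> carrier_mat n n" "B \<in> carrier_mat n n"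
  shows "frobenius_norm_sq n (A * B) \<le> frobenius_norm_sq n A * frobenius_norm_sq n B"
proof -
  have cs: "(cmod (\<Sum>l<n. a l * b l))\<^sup>2 \<le> (\<Sum>l<n. (cmod (a l))\<^sup>2) * (\<Sum>l<n. (cmod (b l))\<^sup>2)"
    for a b :: "nat \<Rightarrow> complex"
  proof -
    have "(cmod (\<Sum>l<n. a l * b l))\<^sup>2 \<le> (\<Sum>l<n. cmod (a l) * cmod (b l))\<^sup>2"
      by (intro power_mono order.trans[OF norm_sum]) (auto simp: norm_mult)
    also have "\<dots> \<le> (\<Sum>l<n. (cmod (a l))\<^sup>2) * (\<Sum>l<n. (cmod (b l))\<^sup>2)"
      by (rule Cauchy_Schwarz_ineq_sum)
    finally show ?thesis .
  qed
  have "frobenius_norm_sq n (A * B) = (\<Sum>i<n. \<Sum>j<n. (cmod (\<Sum>l<n. A $$ (i,l) * B $$ (l,j)))\<^sup>2)"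
    unfolding frobenius_norm_sq_def using assms
    by (intro sum.cong refl) (simp add: index_mult_mat_sum[of _ n n _ n] del: index_mult_mat(1))
  also have "\<dots> \<le> (\<Sum>i<n. \<Sum>j<n. (\<Sum>l<n. (cmod (A $$ (i,l)))\<^sup>2) * (\<Sum>l<n. (cmod (B $$ (l,j)))\<^sup>2))"
    by (intro sum_mono cs)
  also have "\<dots> = frobenius_norm_sq n A * (\<Sum>j<n. \<Sum>l<n. (cmod (B $$ (l,j)))\<^sup>2)"
    unfolding frobenius_norm_sq_def by (simp add: sum_product)
  also have "(\<Sum>j<n. \<Sum>l<n. (cmod (B $$ (l,j)))\<^sup>2) = frobenius_norm_sq n B"
    unfolding frobenius_norm_sq_def by (rule sum.swap)
  finally show ?thesis .
qed

lemma mat_trace_square_add: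
  fixes A B :: "complex mat"
  assumes "A \<in> carrier_mat n n" "B \<in> carrier_mat n n"
  shows "mat_trace ((A + B) * (A + B)) = mat_trace (A * A) + 2 * mat_trace (A * B) + mat_trace (B * B)"
proof -
  have "(A + B) * (A + B) = (A * A + B * A) + (A * B + B * B)"
    using assms by (simp add: add_mult_distrib_mat[of _ n n] mult_add_distrib_mat[of _ n n])
  then have "mat_trace ((A + B) * (A + B))
      = (mat_trace (A * A) + mat_trace (B * A)) + (mat_trace (A * B) + mat_trace (B * B))"
    using assms by (simp add: mat_trace_add[of _ n])
  then show ?thesis using mat_trace_mult_comm[OF assms(2,1)] by simp
qed

lemma frobenius_norm_sq_square_minus:
  fixes X :: "complex mat" and D :: real
  assumes X: "X \<in> carrier_mat n n" and herm: "mat_adjoint X = X"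
  shows "frobenius_norm_sq n (X * X + (- of_real D) \<cdot>\<^sub>m X)
    = frobenius_norm_sq n (X * X) - 2 * D * Re (mat_trace (X * X * X)) + D\<^sup>2 * Re (mat_trace (X * X))"
proof -
  let ?c = "- complex_of_real D"
  have XX: "X * X \<in> carrier_mat n n" and cX: "?c \<cdot>\<^sub>m X \<in> carrier_mat n n" using X by auto
  have "mat_adjoint (X * X) = X * X" using X herm by (simp add: mat_adjoint_mult[of _ n n])
  then have tr4: "mat_trace (X * X * (X * X)) = of_real (frobenius_norm_sq n (X * X))"
    using mat_trace_adjoint_mult_self[OF XX] by simp
  have "mat_adjoint (X * X + ?c \<cdot>\<^sub>m X) = X * X + ?c \<cdot>\<^sub>m X"
    using X herm by (simp add: mat_adjoint_add[of _ n n] mat_adjoint_mult[of _ n n] mat_adjoint_smult)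
  then have "of_real (frobenius_norm_sq n (X * X + ?c \<cdot>\<^sub>m X))
      = mat_trace ((X * X + ?c \<cdot>\<^sub>m X) * (X * X + ?c \<cdot>\<^sub>m X))"
    using mat_trace_adjoint_mult_self[OF add_carrier_mat[OF cX, of "X * X"]] by simp
  also have "\<dots> = mat_trace (X * X * (X * X)) + 2 * mat_trace (X * X * (?c \<cdot>\<^sub>m X))
      + mat_trace ((?c \<cdot>\<^sub>m X) * (?c \<cdot>\<^sub>m X))"
    by (rule mat_trace_square_add[OF XX cX])
  also have "X * X * (?c \<cdot>\<^sub>m X) = ?c \<cdot>\<^sub>m (X * X * X)"
    using X by (simp add: mult_smult_distrib[of _ n n])
  also have "(?c \<cdot>\<^sub>m X) * (?c \<cdot>\<^sub>m X) = (?c * ?c) \<cdot>\<^sub>m (X * X)"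
    by (rule smult_mult_smult_mat[OF X X])
  also have "mat_trace (X * X * (X * X)) + 2 * mat_trace (?c \<cdot>\<^sub>m (X * X * X))
      + mat_trace ((?c * ?c) \<cdot>\<^sub>m (X * X))
      = of_real (frobenius_norm_sq n (X * X)) + 2 * ?c * mat_trace (X * X * X) + ?c * ?c * mat_trace (X * X)"
    using X tr4 by (simp add: mat_trace_smult[of _ n])
  finally show ?thesis
    by (auto simp: complex_eq_iff power2_eq_square)
qed

text \<open>The cubic trace inequality comes from the Hilbert--Schmidt norm of \<open>X\<^sup>2 - D X\<close>, which is
  \<open>\<parallel>X\<^sup>2\<parallel>\<^sup>2 - 2 D Re tr X\<^sup>3 + D\<^sup>4 \<ge> 0\<close>, together with \<open>\<parallel>X\<^sup>2\<parallel>\<^sup>2 \<le> \<parallel>X\<parallel>\<^sup>4 = D\<^sup>4\<close>.\<close>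

lemma trace_cube_le_if_hermitian:
  fixes X :: "complex mat" and D :: real
  assumes X: "X \<in> carrier_mat n n" and herm: "mat_adjoint X = X" and "D > 0"
    and tr2: "mat_trace (X * X) = of_real (D\<^sup>2)"
  shows "Re (mat_trace (X * X * X)) \<le> D ^ 3"
    and "Re (mat_trace (X * X * X)) = D ^ 3 \<Longrightarrow> X * X = of_real D \<cdot>\<^sub>m X"
proof -
  let ?Y = "X * X + (- of_real D) \<cdot>\<^sub>m X"
  have "of_real (frobenius_norm_sq n X) = (of_real (D\<^sup>2) :: complex)"
    using mat_trace_adjoint_mult_self[OF X] herm tr2 by simp
  then have "frobenius_norm_sq n X = D\<^sup>2" by (simp only: of_real_eq_iff)
  then have norm4: "frobenius_norm_sq n (X * X) \<le> D ^ 4"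
    using frobenius_norm_sq_mult_le[OF X X] by (simp add: power4_eq_xxxx power2_eq_square)
  have normY: "frobenius_norm_sq n ?Y = frobenius_norm_sq n (X * X) - 2 * D * Re (mat_trace (X * X * X)) + D ^ 4"
    using frobenius_norm_sq_square_minus[OF X herm, of D] tr2 by (simp add: power4_eq_xxxx power2_eq_square)
  then have "D * Re (mat_trace (X * X * X)) \<le> D * D ^ 3"
    using norm4 frobenius_norm_sq_nonneg[of n ?Y] by (simp add: power4_eq_xxxx power3_eq_cube)
  then show "Re (mat_trace (X * X * X)) \<le> D ^ 3" using \<open>D > 0\<close> by simp
  assume "Re (mat_trace (X * X * X)) = D ^ 3"
  then have "frobenius_norm_sq n ?Y = 0"
    using normY norm4 frobenius_norm_sq_nonneg[of n ?Y] by (simp add: power4_eq_xxxx power3_eq_cube)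
  then have "?Y = 0\<^sub>m n n"
    using X by (simp add: frobenius_norm_sq_eq_0_iff)
  then have "?Y + of_real D \<cdot>\<^sub>m X = 0\<^sub>m n n + of_real D \<cdot>\<^sub>m X"
    by simp
  moreover have "?Y + of_real D \<cdot>\<^sub>m X = X * X" and "0\<^sub>m n n + of_real D \<cdot>\<^sub>m X = of_real D \<cdot>\<^sub>m X"
    using X by (auto intro!: eq_matI)
  ultimately show "X * X = of_real D \<cdot>\<^sub>m X" by simp
qed

lemma unitary_conj_smult:
  fixes U M :: "complex mat"
  assumes "U \<in> carrier_mat n n" "M \<in> carrier_mat n n"
  shows "U * (c \<cdot>\<^sub>m M) * mat_adjoint U = c \<cdot>\<^sub>m (U * M * mat_adjoint U)"
  using assms by (simp add: mult_smult_distrib[of _ n n] mult_smult_assoc_mat[of _ n n _ n])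

lemma unitary_conj_one_plus:
  fixes U B :: "complex mat"
  assumes U: "U \<in> carrier_mat n n" and B: "B \<in> carrier_mat n n" and "U * mat_adjoint U = 1\<^sub>m n"
  shows "U * (1\<^sub>m n + B) * mat_adjoint U = 1\<^sub>m n + U * B * mat_adjoint U"
proof -
  have "U * (1\<^sub>m n + B) = U * 1\<^sub>m n + U * B" by (rule mult_add_distrib_mat) (use U B in auto)
  then have "U * (1\<^sub>m n + B) * mat_adjoint U = (U + U * B) * mat_adjoint U" using U by simp
  also have "\<dots> = U * mat_adjoint U + U * B * mat_adjoint U"
    by (rule add_mult_distrib_mat) (use U B in auto)
  finally show ?thesis using assms(3) by simp
qed

lemma idempotent_index_sum:
  assumes "P \<in> carrier_mat n n" "P * P = P" "i < n" "j < n"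
  shows "(\<Sum>l<n. P $$ (i,l) * P $$ (l,j)) = P $$ (i,j)"
  using index_mult_mat_sum[OF assms(1,1,3,4)] assms(2) by simp

text \<open>With \<open>a = P\<^sub>k\<^sub>k\<close>, the squared Hilbert--Schmidt norm of \<open>a P - P e\<^sub>k e\<^sub>k\<^sup>* P\<close> is
  \<open>a\<^sup>2 tr P - 2 a\<^sup>2 + a\<^sup>2\<close>, which vanishes when \<open>tr P = 1\<close>.\<close>

lemma projector_trace_1_index_factor:
  fixes P :: "complex mat"
  assumes P: "P \<in> carrier_mat n n" and idem: "P * P = P" and herm: "mat_adjoint P = P"
    and tr: "mat_trace P = 1" and k: "k < n" and r: "r < n" and c: "c < n"
  shows "P $$ (r,c) * P $$ (k,k) = P $$ (r,k) * P $$ (k,c)"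
proof -
  let ?a = "P $$ (k,k)"
  define W where "W = mat n n (\<lambda>(i,j). P $$ (i,j) * ?a - P $$ (i,k) * P $$ (k,j))"
  have W: "W \<in> carrier_mat n n" by (simp add: W_def)
  have cnjP: "cnj (P $$ (i,j)) = P $$ (j,i)" if "i < n" "j < n" for i j
    using hermitian_cnj_index[OF P herm that] .
  note PP = idempotent_index_sum[OF P idem]
  have S1: "(\<Sum>i<n. \<Sum>j<n. P $$ (i,j) * P $$ (j,i)) = 1"
    using tr P by (simp add: PP mat_trace_def)
  have S2: "(\<Sum>i<n. \<Sum>j<n. P $$ (k,i) * (P $$ (i,j) * P $$ (j,k))) = ?a"
    using k by (simp add: PP flip: sum_distrib_left)
  have S3: "(\<Sum>i<n. \<Sum>j<n. P $$ (k,j) * P $$ (j,i) * P $$ (i,k)) = ?a"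
    using k by (simp add: PP flip: sum_distrib_right)
  have S4: "(\<Sum>i<n. \<Sum>j<n. P $$ (k,i) * P $$ (i,k) * (P $$ (k,j) * P $$ (j,k))) = ?a * ?a"
    unfolding sum_product[symmetric] PP[OF k k] ..
  have "of_real (frobenius_norm_sq n W)
      = (\<Sum>i<n. \<Sum>j<n. ?a * ?a * (P $$ (i,j) * P $$ (j,i)) - ?a * (P $$ (k,i) * (P $$ (i,j) * P $$ (j,k)))
          - ?a * (P $$ (k,j) * P $$ (j,i) * P $$ (i,k)) + P $$ (k,i) * P $$ (i,k) * (P $$ (k,j) * P $$ (j,k)))"
    unfolding of_real_frobenius_norm_sq W_def using k
    by (intro sum.cong refl) (simp add: cnjP algebra_simps)
  also have "\<dots> = ?a * ?a * (\<Sum>i<n. \<Sum>j<n. P $$ (i,j) * P $$ (j,i))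
      - ?a * (\<Sum>i<n. \<Sum>j<n. P $$ (k,i) * (P $$ (i,j) * P $$ (j,k)))
      - ?a * (\<Sum>i<n. \<Sum>j<n. P $$ (k,j) * P $$ (j,i) * P $$ (i,k))
      + (\<Sum>i<n. \<Sum>j<n. P $$ (k,i) * P $$ (i,k) * (P $$ (k,j) * P $$ (j,k)))"
    by (simp only: sum.distrib sum_subtractf flip: sum_distrib_left)
  also have "\<dots> = 0"
    unfolding S1 S2 S3 S4 by simp
  finally have "W = 0\<^sub>m n n" by (simp add: frobenius_norm_sq_eq_0_iff[OF W, symmetric])
  then have "W $$ (r,c) = 0" using r c by simp
  then show ?thesis using r c by (simp add: W_def)
qed

lemma rank_ge_1_if_index_nonzero:
  fixes A :: "'a :: field mat"
  assumes A: "A \<in> carrier_mat n m" and "i < n" "j < m" "A $$ (i,j) \<noteq> 0"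
  shows "1 \<le> vec_space.rank n A"
proof -
  have rows: "{i'. i' < dim_row A \<and> i' \<in> {i}} = {i}" and cols: "{j'. j' < dim_col A \<and> j' \<in> {j}} = {j}"
    using assms by auto
  have pick: "pick {x} 0 = x" for x :: nat by (simp add: Least_equality)
  have "submatrix A {i} {j} \<in> carrier_mat 1 1"
    by (rule carrier_matI) (simp_all only: dim_submatrix rows cols, simp_all)
  then have "det (submatrix A {i} {j}) = submatrix A {i} {j} $$ (0,0)"
    by (rule det_single)
  also have "\<dots> = A $$ (i,j)"
    by (subst submatrix_index) (simp_all only: rows cols pick, simp_all)
  finally have "det (submatrix A {i} {j}) \<noteq> 0" using assms(4) by simp
  from vec_space.rank_gt_minor[OF A this] have "card {j'. j' < m \<and> j' \<in> {j}} \<le> vec_space.rank n A" .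
  then show ?thesis using cols A by simp
qed

lemma rank_one_projector_if_trace_1:
  fixes P :: "complex mat"
  assumes P: "P \<in> carrier_mat n n" and idem: "P * P = P" and herm: "mat_adjoint P = P"
    and tr: "mat_trace P = 1"
  shows "rank_one_projector n P"
proof -
  obtain k where k: "k < n" "P $$ (k,k) \<noteq> 0"
    using tr P unfolding mat_trace_def by (metis (no_types, lifting) carrier_matD(1) sum.neutral
        lessThan_iff zero_neq_one)
  have "vec_space.rank n P \<le> 1"
    using P projector_trace_1_index_factor[OF P idem herm tr k(1)] k(2)
    by (intro vec_space.rank_le_1_product_entries[OF P, of "\<lambda>r. P $$ (r,k)" "\<lambda>c. P $$ (k,c) / P $$ (k,k)"])
      (auto simp: field_simps)
  moreover have "1 \<le> vec_space.rank n P"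
    using rank_ge_1_if_index_nonzero[OF P k(1) k(1) k(2)] .
  ultimately show ?thesis
    unfolding rank_one_projector_def using P idem herm by simp
qed

lemma rank_one_projector_unitary_conj:
  fixes U P :: "complex mat"
  assumes U: "U \<in> carrier_mat n n" "mat_adjoint U * U = 1\<^sub>m n"
    and P: "P \<in> carrier_mat n n" "P * P = P" "mat_adjoint P = P" "mat_trace P = 1"
  shows "rank_one_projector n (U * P * mat_adjoint U)"
  using assms unitary_conj_mult[OF U(1) P(1) P(1) U(2)] unitary_conj_adjoint[OF U(1) P(1)]
    mat_trace_unitary_conj[OF U(1) P(1) U(2)]
  by (intro rank_one_projector_if_trace_1) auto


lemma smult_mat_cancel:
  fixes A B :: "'a :: field mat"
  assumes "c \<noteq> 0" "c \<cdot>\<^sub>m A = c \<cdot>\<^sub>m B"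
  shows "A = B"
proof -
  have "(1 / c) \<cdot>\<^sub>m (c \<cdot>\<^sub>m A) = (1 / c) \<cdot>\<^sub>m (c \<cdot>\<^sub>m B)" using assms(2) by simp
  then show ?thesis using assms(1) by (simp add: smult_smult_mat)
qed

lemma rank_one_projector_scaled_iff:
  fixes X :: "complex mat"
  assumes "n > 0" and X: "X \<in> carrier_mat n n" and herm: "mat_adjoint X = X"
    and tr: "mat_trace X = of_nat n"
  shows "rank_one_projector n ((1 / of_nat n) \<cdot>\<^sub>m X) \<longleftrightarrow> X * X = of_nat n \<cdot>\<^sub>m X"
proof -
  let ?P = "(1 / of_nat n) \<cdot>\<^sub>m X"
  have n: "(of_nat n :: complex) \<noteq> 0" using \<open>n > 0\<close> by simp
  have "?P * ?P = (1 / of_nat n) \<cdot>\<^sub>m ((1 / of_nat n) \<cdot>\<^sub>m (X * X))"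
    using X by (simp add: smult_mult_smult_mat[OF X X] smult_smult_mat)
  then have "?P * ?P = ?P \<longleftrightarrow> (1 / of_nat n) \<cdot>\<^sub>m (X * X) = X"
    using n by (auto dest: smult_mat_cancel[rotated])
  also have "\<dots> \<longleftrightarrow> X * X = of_nat n \<cdot>\<^sub>m X"
    using n by (auto simp: smult_smult_mat dest: arg_cong[where f = "\<lambda>M. of_nat n \<cdot>\<^sub>m M"])
  finally have idem: "?P * ?P = ?P \<longleftrightarrow> X * X = of_nat n \<cdot>\<^sub>m X" .
  have "mat_adjoint ?P = ?P" using herm by (simp add: mat_adjoint_smult)
  moreover have "mat_trace ?P = 1" using tr n X by (simp add: mat_trace_smult)
  ultimately show ?thesis
    using idem X rank_one_projector_if_trace_1[of ?P n] unfolding rank_one_projector_def by auto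
qed

lemma mat_trace_one_plus_mult:
  fixes X Y :: "complex mat"
  assumes X: "X \<in> carrier_mat n n" and Y: "Y \<in> carrier_mat n n"
  shows "mat_trace ((1\<^sub>m n + X) * (1\<^sub>m n + Y)) = of_nat n + mat_trace X + mat_trace Y + mat_trace (X * Y)"
proof -
  have "(1\<^sub>m n + X) * (1\<^sub>m n + Y) = 1\<^sub>m n * (1\<^sub>m n + Y) + X * (1\<^sub>m n + Y)"
    using assms by (intro add_mult_distrib_mat) auto
  also have "X * (1\<^sub>m n + Y) = X * 1\<^sub>m n + X * Y"
    using assms by (intro mult_add_distrib_mat) auto
  finally have "(1\<^sub>m n + X) * (1\<^sub>m n + Y) = (1\<^sub>m n + Y) + (X + X * Y)"
    using assms by simp
  then show ?thesis using assms by (simp add: mat_trace_add[of _ n])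
qed

lemma mat_trace_one_plus_cube:
  fixes B :: "complex mat"
  assumes B: "B \<in> carrier_mat n n"
  shows "mat_trace ((1\<^sub>m n + B) * (1\<^sub>m n + B) * (1\<^sub>m n + B))
      = of_nat n + 3 * mat_trace B + 3 * mat_trace (B * B) + mat_trace (B * B * B)"
proof -
  let ?X = "1\<^sub>m n + B"
  have BB: "B * B \<in> carrier_mat n n" and BBB: "B * B * B \<in> carrier_mat n n" using B by auto
  have "?X * ?X = 1\<^sub>m n * ?X + B * ?X"
    using B by (intro add_mult_distrib_mat) auto
  also have "B * ?X = B * 1\<^sub>m n + B * B"
    using B by (intro mult_add_distrib_mat) auto
  finally have "?X * ?X * ?X = (?X + (B + B * B)) * ?X"
    using B by simp
  also have "\<dots> = ?X * ?X + (B + B * B) * ?X"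
    using B by (intro add_mult_distrib_mat) auto
  also have "(B + B * B) * ?X = B * ?X + B * B * ?X"
    using B by (intro add_mult_distrib_mat) auto
  also have "B * ?X = B * 1\<^sub>m n + B * B"
    using B by (intro mult_add_distrib_mat) auto
  also have "B * B * ?X = B * B * 1\<^sub>m n + B * B * B"
    using B BB by (intro mult_add_distrib_mat) auto
  finally have "?X * ?X * ?X = ?X * ?X + ((B + B * B) + (B * B + B * B * B))"
    using B BB by simp
  moreover have "mat_trace (?X * ?X + ((B + B * B) + (B * B + B * B * B)))
      = mat_trace (?X * ?X) + ((mat_trace B + mat_trace (B * B)) + (mat_trace (B * B) + mat_trace (B * B * B)))"
  proof -
    have "?X * ?X \<in> carrier_mat n n" "B + B * B \<in> carrier_mat n n" "B * B + B * B * B \<in> carrier_mat n n"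
      using B BB BBB by auto
    then show ?thesis
      using B BB BBB by (simp only: mat_trace_add[of _ n] add_carrier_mat)
  qed
  ultimately show ?thesis
    using mat_trace_one_plus_mult[OF B B] by simp
qed

lemma trace_cube_le_if_traceless:
  fixes B :: "complex mat"
  assumes "n > 0" and B: "B \<in> carrier_mat n n" and herm: "mat_adjoint B = B"
    and tr1: "mat_trace B = 0" and tr2: "mat_trace (B * B) = of_real (real n * (real n - 1))"
  shows "Re (mat_trace (B * B * B)) \<le> real n * (real n - 1) * (real n - 2)"
    and "Re (mat_trace (B * B * B)) = real n * (real n - 1) * (real n - 2)
      \<longleftrightarrow> rank_one_projector n ((1 / of_nat n) \<cdot>\<^sub>m (1\<^sub>m n + B))"
proof -
  let ?X = "1\<^sub>m n + B"
  have X: "?X \<in> carrier_mat n n" using B by simp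
  have hermX: "mat_adjoint ?X = ?X" using B herm by (simp add: mat_adjoint_add[of _ n n])
  have trX: "mat_trace ?X = of_nat n" using B tr1 by (simp add: mat_trace_add[of _ n])
  have trX2: "mat_trace (?X * ?X) = of_real ((real n)\<^sup>2)"
    using mat_trace_one_plus_mult[OF B B] tr1 tr2 by (simp add: power2_eq_square algebra_simps)
  have "mat_trace (?X * ?X * ?X) = of_nat n + 3 * of_real (real n * (real n - 1)) + mat_trace (B * B * B)"
    using mat_trace_one_plus_cube[OF B] tr1 tr2 by simp
  then have "Re (mat_trace (?X * ?X * ?X)) = real n + 3 * (real n * (real n - 1)) + Re (mat_trace (B * B * B))"
    by simp
  then have ReX3: "Re (mat_trace (?X * ?X * ?X))
      = (real n)^3 - real n * (real n - 1) * (real n - 2) + Re (mat_trace (B * B * B))"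
    by (simp add: power3_eq_cube algebra_simps)
  note cube = trace_cube_le_if_hermitian[OF X hermX _ trX2]
  show "Re (mat_trace (B * B * B)) \<le> real n * (real n - 1) * (real n - 2)"
    using cube(1) \<open>n > 0\<close> ReX3 by simp
  have "Re (mat_trace (?X * ?X * ?X)) = (real n)^3 \<longleftrightarrow> ?X * ?X = of_nat n \<cdot>\<^sub>m ?X"
  proof
    assume sq: "?X * ?X = of_nat n \<cdot>\<^sub>m ?X"
    have "?X * ?X * ?X = (of_nat n \<cdot>\<^sub>m ?X) * ?X" by (simp only: sq)
    also have "\<dots> = of_nat n \<cdot>\<^sub>m (?X * ?X)" by (rule mult_smult_assoc_mat[OF X X])
    finally have "?X * ?X * ?X = of_nat n \<cdot>\<^sub>m (?X * ?X)" .
    then show "Re (mat_trace (?X * ?X * ?X)) = (real n)^3"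
      using trX2 X by (simp add: mat_trace_smult[of _ n] power2_eq_square power3_eq_cube)
  qed (use cube(2) \<open>n > 0\<close> in simp)
  then show "Re (mat_trace (B * B * B)) = real n * (real n - 1) * (real n - 2)
      \<longleftrightarrow> rank_one_projector n ((1 / of_nat n) \<cdot>\<^sub>m ?X)"
    using ReX3 rank_one_projector_scaled_iff[OF \<open>n > 0\<close> X hermX trX] by simp
qed


section \<open>Finite sums of matrices\<close>

lemma msum_carrier [simp]: "msum d f A \<in> carrier_mat d d"
  and msum_dim [simp]: "dim_row (msum d f A) = d" "dim_col (msum d f A) = d"
  by (simp_all add: msum_def)

lemma msum_index: "i < d \<Longrightarrow> j < d \<Longrightarrow> msum d f A $$ (i,j) = (\<Sum>a\<in>A. f a $$ (i,j))"
  by (simp add: msum_def)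

lemma msum_cong: "(\<And>a. a \<in> A \<Longrightarrow> f a = g a) \<Longrightarrow> msum d f A = msum d g A"
  unfolding msum_def by (rule cong[OF refl]) (auto intro!: sum.cong)

lemma msum_reindex: "inj_on h A \<Longrightarrow> msum d f (h ` A) = msum d (\<lambda>a. f (h a)) A"
  unfolding msum_def by (simp add: sum.reindex)

lemma msum_mult:
  assumes f: "\<And>a. a \<in> A \<Longrightarrow> f a \<in> carrier_mat d d" and M: "M \<in> carrier_mat d d"
  shows "msum d f A * M = msum d (\<lambda>a. f a * M) A"
proof (rule eq_matI)
  fix i j assume "i < dim_row (msum d (\<lambda>a. f a * M) A)" "j < dim_col (msum d (\<lambda>a. f a * M) A)"
  then have i: "i < d" and j: "j < d" by auto
  have "(msum d f A * M) $$ (i,j) = (\<Sum>k<d. \<Sum>a\<in>A. f a $$ (i,k) * M $$ (k,j))"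
    using i j M by (simp add: index_mult_mat_sum[of _ d d _ d] msum_index sum_distrib_right
        del: index_mult_mat(1))
  also have "\<dots> = (\<Sum>a\<in>A. (f a * M) $$ (i,j))"
    using i j f M by (subst sum.swap) (simp add: index_mult_mat_sum[of _ d d _ d] del: index_mult_mat(1))
  finally show "(msum d f A * M) $$ (i,j) = msum d (\<lambda>a. f a * M) A $$ (i,j)"
    using i j by (simp add: msum_index)
qed (use M in auto)

lemma mult_msum:
  assumes f: "\<And>a. a \<in> A \<Longrightarrow> f a \<in> carrier_mat d d" and M: "M \<in> carrier_mat d d"
  shows "M * msum d f A = msum d (\<lambda>a. M * f a) A"
proof (rule eq_matI)
  fix i j assume "i < dim_row (msum d (\<lambda>a. M * f a) A)" "j < dim_col (msum d (\<lambda>a. M * f a) A)"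
  then have i: "i < d" and j: "j < d" by auto
  have "(M * msum d f A) $$ (i,j) = (\<Sum>k<d. \<Sum>a\<in>A. M $$ (i,k) * f a $$ (k,j))"
    using i j M by (simp add: index_mult_mat_sum[of _ d d _ d] msum_index sum_distrib_left
        del: index_mult_mat(1))
  also have "\<dots> = (\<Sum>a\<in>A. (M * f a) $$ (i,j))"
    using i j f M by (subst sum.swap) (simp add: index_mult_mat_sum[of _ d d _ d] del: index_mult_mat(1))
  finally show "(M * msum d f A) $$ (i,j) = msum d (\<lambda>a. M * f a) A $$ (i,j)"
    using i j by (simp add: msum_index)
qed (use M in auto)

lemma smult_msum:
  assumes "\<And>a. a \<in> A \<Longrightarrow> f a \<in> carrier_mat d d"
  shows "c \<cdot>\<^sub>m msum d f A = msum d (\<lambda>a. c \<cdot>\<^sub>m f a) A"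
proof (rule eq_matI)
  fix i j assume "i < dim_row (msum d (\<lambda>a. c \<cdot>\<^sub>m f a) A)" "j < dim_col (msum d (\<lambda>a. c \<cdot>\<^sub>m f a) A)"
  then have ij: "i < d" "j < d" by auto
  then have "(c \<cdot>\<^sub>m f a) $$ (i,j) = c * f a $$ (i,j)" if "a \<in> A" for a
    using assms[OF that] by simp
  with ij show "(c \<cdot>\<^sub>m msum d f A) $$ (i,j) = msum d (\<lambda>a. c \<cdot>\<^sub>m f a) A $$ (i,j)"
    by (simp add: msum_index sum_distrib_left)
qed auto

lemma mat_adjoint_msum:
  assumes "\<And>a. a \<in> A \<Longrightarrow> f a \<in> carrier_mat d d"
  shows "mat_adjoint (msum d f A) = msum d (\<lambda>a. mat_adjoint (f a)) A"
proof (rule eq_matI)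
  fix i j assume "i < dim_row (msum d (\<lambda>a. mat_adjoint (f a)) A)" "j < dim_col (msum d (\<lambda>a. mat_adjoint (f a)) A)"
  then have ij: "i < d" "j < d" by auto
  then have "mat_adjoint (f a) $$ (i,j) = cnj (f a $$ (j,i))" if "a \<in> A" for a
    using assms[OF that] by simp
  with ij show "mat_adjoint (msum d f A) $$ (i,j) = msum d (\<lambda>a. mat_adjoint (f a)) A $$ (i,j)"
    by (simp add: msum_index)
qed auto

lemma mat_trace_msum:
  assumes "\<And>a. a \<in> A \<Longrightarrow> f a \<in> carrier_mat d d"
  shows "mat_trace (msum d f A) = (\<Sum>a\<in>A. mat_trace (f a))"
proof -
  have "mat_trace (msum d f A) = (\<Sum>i<d. \<Sum>a\<in>A. f a $$ (i,i))"
    unfolding mat_trace_def by (simp add: msum_index)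
  also have "\<dots> = (\<Sum>a\<in>A. mat_trace (f a))"
    using assms unfolding mat_trace_def by (subst sum.swap) (auto intro!: sum.cong)
  finally show ?thesis .
qed


section \<open>Powers of \<open>\<tau>\<close>\<close>

lemma tau_eq_cis: "d > 0 \<Longrightarrow> tau d = cis (pi * (real d + 1) / real d)"
proof -
  assume "d > 0"
  have "tau d = cis (pi / real d) * cis pi" by (simp add: tau_def cis_conv_exp mult.commute)
  also have "\<dots> = cis (pi / real d + pi)" by (simp only: cis_mult)
  also have "pi / real d + pi = pi * (real d + 1) / real d" using \<open>d > 0\<close> by (simp add: field_simps)
  finally show ?thesis .
qed

lemma tau_nonzero [simp]: "tau d \<noteq> 0"
  by (simp add: tau_def)

lemma tau_power_int: "d > 0 \<Longrightarrow> tau d powi k = cis (of_int k * (pi * (real d + 1) / real d))"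
  by (simp add: tau_eq_cis cis_power_int)

lemma tau_power_int_add: "tau d powi (a + b) = tau d powi a * tau d powi b"
  by (simp add: power_int_add)

lemma cnj_tau_power_int:
  assumes "d > 0" shows "cnj (tau d) powi a = tau d powi (- a)"
proof -
  have "cnj (tau d) = cis (- (pi * (real d + 1) / real d))"
    using assms by (simp add: tau_eq_cis cis_cnj)
  then show ?thesis using assms by (simp add: tau_power_int cis_power_int)
qed

lemma tau_power_int_cong:
  assumes "d > 0" and "a = b + 2 * int d * n"
  shows "tau d powi a = tau d powi b"
proof -
  have "of_int a * (pi * (real d + 1) / real d)
      = of_int b * (pi * (real d + 1) / real d) + 2 * pi * of_int (n * (int d + 1))"
    using assms by (simp add: field_simps)
  then show ?thesis
    using assms(1) by (simp add: tau_power_int cis_mult[symmetric])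
qed

lemma tau_power_int_d_mult:
  assumes "d > 0" shows "tau d powi (int d * k) = (-1) powi ((int d + 1) * k)"
proof -
  have "of_int (int d * k) * (pi * (real d + 1) / real d) = of_int ((int d + 1) * k) * pi"
    using assms by (simp add: field_simps)
  then have "tau d powi (int d * k) = cis (of_int ((int d + 1) * k) * pi)"
    using assms by (simp only: tau_power_int)
  also have "\<dots> = (-1) powi ((int d + 1) * k)" by (simp only: cis_power_int[symmetric] cis_pi)
  finally show ?thesis .
qed

lemma minus_one_power_int_cong: "a = b + 2 * n \<Longrightarrow> (-1 :: 'a :: field) powi a = (-1) powi b"
  by (simp add: power_int_add power_int_mult)

lemma dvd_if_tau_power_int_double_eq_1:
  assumes "d > 0" and "tau d powi (2 * k) = 1"
  shows "int d dvd k"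
proof -
  have "cos (of_int (2 * k) * (pi * (real d + 1) / real d)) = 1"
    using assms by (simp add: tau_power_int complex_eq_iff)
  then obtain n :: int where "of_int (2 * k) * (pi * (real d + 1) / real d) = n * 2 * pi"
    by (auto simp: cos_one_2pi_int)
  then have "2 * pi * (of_int k * (real d + 1)) = 2 * pi * (of_int n * real d)"
    using assms(1) by (simp add: field_simps)
  then have "real_of_int (k * (int d + 1)) = of_int (n * int d)"
    by simp
  then have "k = (n - k) * int d"
    by (simp only: of_int_eq_iff) (simp add: algebra_simps)
  then show ?thesis by (metis dvd_triv_right)
qed

lemma sum_tau_power_int_double_mult:
  assumes "d > 0" and "\<not> int d dvd a"
  shows "(\<Sum>k\<in>{0..<int d}. tau d powi (2 * a * k)) = 0"
proof -
  let ?z = "tau d powi (2 * a)"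
  have "?z ^ d = tau d powi (2 * a * int d)" by (simp add: power_int_power')
  also have "\<dots> = tau d powi 0" by (rule tau_power_int_cong[OF assms(1), of _ _ a]) simp
  finally have "?z ^ d = 1" by simp
  moreover have "?z \<noteq> 1"
    using dvd_if_tau_power_int_double_eq_1[OF assms(1)] assms(2) by blast
  moreover have "(\<Sum>k\<in>{0..<int d}. tau d powi (2 * a * k)) = (\<Sum>k<d. ?z ^ k)"
  proof -
    have "{0..<int d} = int ` {..<d}" by (simp add: image_int_atLeastLessThan flip: atLeast0LessThan)
    then have "(\<Sum>k\<in>{0..<int d}. tau d powi (2 * a * k)) = (\<Sum>k<d. tau d powi (2 * a * int k))"
      by (simp add: sum.reindex)
    also have "\<dots> = (\<Sum>k<d. ?z ^ k)"
      by (intro sum.cong refl) (simp only: power_int_mult power_int_of_nat)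
    finally show ?thesis .
  qed
  ultimately show ?thesis by (simp add: geometric_sum)
qed


section \<open>The lattice \<open>\<int>\<^sub>d\<^sup>2\<close> and its characters\<close>

lemma Zd2_finite [simp]: "finite (Zd2 d)"
  and Zd2star_finite [simp]: "finite (Zd2star d)"
  by (simp_all add: Zd2_def Zd2star_def)

lemma Zd2star_subset: "Zd2star d \<subseteq> Zd2 d"
  by (auto simp: Zd2star_def)

lemma zero_in_Zd2: "d > 0 \<Longrightarrow> (0,0) \<in> Zd2 d"
  by (simp add: Zd2_def)

lemma card_Zd2: "card (Zd2 d) = d\<^sup>2"
  by (simp add: Zd2_def power2_eq_square)

lemma card_Zd2star: "card (Zd2star d) = d\<^sup>2 - 1"
  by (cases "d = 0") (auto simp: Zd2star_def Zd2_def card_Zd2[unfolded Zd2_def] card_Diff_singleton)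

lemma red_in_Zd2: "d > 0 \<Longrightarrow> red d p \<in> Zd2 d"
  by (simp add: red_def Zd2_def)

lemma red_eq_self: "p \<in> Zd2 d \<Longrightarrow> red d p = p"
  by (cases p) (auto simp: red_def Zd2_def)

lemma red_eq_0_iff: "red d p = (0,0) \<longleftrightarrow> int d dvd fst p \<and> int d dvd snd p"
  by (cases p) (auto simp: red_def)

lemma Zd2star_not_dvd: "q \<in> Zd2star d \<Longrightarrow> \<not> (int d dvd fst q \<and> int d dvd snd q)"
  using red_eq_self[of q d] red_eq_0_iff[of d q] by (auto simp: Zd2star_def)

lemma Zd2_diff_not_dvd:
  assumes "p \<in> Zd2 d" "q \<in> Zd2 d" "p \<noteq> q"
  shows "\<not> (int d dvd fst p - fst q \<and> int d dvd snd p - snd q)"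
proof
  assume "int d dvd fst p - fst q \<and> int d dvd snd p - snd q"
  then have "fst p mod int d = fst q mod int d" "snd p mod int d = snd q mod int d"
    by (simp_all add: mod_eq_dvd_iff)
  then have "red d p = red d q" by (simp add: red_def)
  then show False using assms by (simp add: red_eq_self)
qed

lemma bar_in_Zd2star: "q \<in> Zd2star d \<Longrightarrow> bar d q \<in> Zd2star d"
  using Zd2star_not_dvd[of q d] red_in_Zd2[of d]
  by (auto simp: Zd2star_def Zd2_def bar_def red_eq_0_iff)

lemma bar_bar: "q \<in> Zd2 d \<Longrightarrow> bar d (bar d q) = q"
  by (simp add: bar_def red_def mod_minus_eq red_eq_self[unfolded red_def])

lemma bij_betw_bar: "bij_betw (bar d) (Zd2star d) (Zd2star d)"
  by (rule bij_betwI[where g = "bar d"]) (auto simp: bar_in_Zd2star bar_bar subsetD[OF Zd2star_subset])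

lemma sum_Zd2_tau_power_linear:
  assumes "d > 0" and "\<not> (int d dvd a \<and> int d dvd b)"
  shows "(\<Sum>x\<in>Zd2 d. tau d powi (2 * (a * fst x + b * snd x))) = 0"
proof -
  have "(\<Sum>x\<in>Zd2 d. tau d powi (2 * (a * fst x + b * snd x)))
      = (\<Sum>x\<in>{0..<int d}. tau d powi (2 * a * x)) * (\<Sum>y\<in>{0..<int d}. tau d powi (2 * b * y))"
    unfolding Zd2_def sum.cartesian_product sum_product
    by (rule sum.cong) (auto simp: tau_power_int_add[symmetric] algebra_simps)
  then show ?thesis using assms sum_tau_power_int_double_mult[OF assms(1)] by auto
qed

lemma sum_Zd2_tau_symp:
  assumes "d > 0" and "\<not> (int d dvd fst u \<and> int d dvd snd u)"
  shows "(\<Sum>x\<in>Zd2 d. tau d powi (2 * symp x u)) = 0"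
proof -
  have "(\<Sum>x\<in>Zd2 d. tau d powi (2 * symp x u))
      = (\<Sum>x\<in>Zd2 d. tau d powi (2 * ((- snd u) * fst x + fst u * snd x)))"
    by (intro sum.cong refl) (simp add: symp_def algebra_simps)
  also have "\<dots> = 0" using assms by (intro sum_Zd2_tau_power_linear) auto
  finally show ?thesis .
qed

lemma sum_Zd2star_tau_symp:
  assumes "d > 0" and "\<not> (int d dvd fst u \<and> int d dvd snd u)"
  shows "(\<Sum>x\<in>Zd2star d. tau d powi (2 * symp x u)) = -1"
proof -
  have "(\<Sum>x\<in>Zd2 d. tau d powi (2 * symp x u)) = 1 + (\<Sum>x\<in>Zd2star d. tau d powi (2 * symp x u))"
    unfolding Zd2star_def using zero_in_Zd2[OF assms(1)] by (simp add: sum.remove symp_def)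
  then show ?thesis using sum_Zd2_tau_symp[OF assms] by (simp add: add_eq_0_iff)
qed


section \<open>Displacement operators\<close>

lemma displ_carrier [simp]: "displ d p \<in> carrier_mat d d"
  and displ_dim [simp]: "dim_row (displ d p) = d" "dim_col (displ d p) = d"
  by (simp_all add: displ_def)

lemma displ_index:
  "i < d \<Longrightarrow> j < d \<Longrightarrow> displ d p $$ (i,j) =
    (if int i = (int j + fst p) mod int d then tau d powi (fst p * snd p + 2 * int j * snd p) else 0)"
  by (simp add: displ_def tau_power_int_add)

lemma eq_add_mod_iff_eq_diff_mod:
  assumes "i < d" "k < d"
  shows "int i = (int k + a) mod int d \<longleftrightarrow> int k = (int i - a) mod int d"
  using assms by (auto simp: mod_diff_left_eq mod_add_left_eq)

lemma mult_displ_index: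
  assumes M: "M \<in> carrier_mat d d" and ij: "i < d" "j < d"
  shows "(M * displ d q) $$ (i,j)
    = M $$ (i, nat ((int j + fst q) mod int d)) * tau d powi (fst q * snd q + 2 * int j * snd q)"
proof -
  let ?k = "nat ((int j + fst q) mod int d)"
  have "(M * displ d q) $$ (i,j) = (\<Sum>k<d. M $$ (i,k) * displ d q $$ (k,j))"
    by (rule index_mult_mat_sum[OF M displ_carrier ij])
  also have "\<dots> = (\<Sum>k<d. if k = ?k then M $$ (i,k) * tau d powi (fst q * snd q + 2 * int j * snd q) else 0)"
  proof (rule sum.cong[OF refl])
    fix k assume "k \<in> {..<d}"
    then have "k < d" "(int k = (int j + fst q) mod int d) = (k = ?k)" by auto
    then show "M $$ (i,k) * displ d q $$ (k,j)
        = (if k = ?k then M $$ (i,k) * tau d powi (fst q * snd q + 2 * int j * snd q) else 0)"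
      using ij by (simp add: displ_index)
  qed
  also have "\<dots> = M $$ (i, ?k) * tau d powi (fst q * snd q + 2 * int j * snd q)"
    using ij by (simp add: nat_less_iff)
  finally show ?thesis .
qed

lemma displ_mult:
  assumes "d > 0"
  shows "displ d p * displ d q = tau d powi (symp p q) \<cdot>\<^sub>m displ d (fst p + fst q, snd p + snd q)"
proof (rule eq_matI)
  fix i j assume "i < dim_row (tau d powi (symp p q) \<cdot>\<^sub>m displ d (fst p + fst q, snd p + snd q))"
    "j < dim_col (tau d powi (symp p q) \<cdot>\<^sub>m displ d (fst p + fst q, snd p + snd q))"
  then have i: "i < d" and j: "j < d" by auto
  define k where "k = (int j + fst q) mod int d"
  have k: "int (nat k) = k" "nat k < d" using assms by (auto simp: k_def nat_less_iff)
  have ke: "k = int j + fst q - int d * ((int j + fst q) div int d)"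
    unfolding k_def by (simp add: minus_mult_div_eq_mod)
  have "(k + fst p) mod int d = ((int j + fst q) + fst p) mod int d"
    unfolding k_def by (rule mod_add_left_eq)
  then have cond: "(k + fst p) mod int d = (int j + (fst p + fst q)) mod int d"
    by (simp add: add_ac)
  have "(displ d p * displ d q) $$ (i,j)
      = (if int i = (k + fst p) mod int d then tau d powi (fst p * snd p + 2 * k * snd p) else 0)
        * tau d powi (fst q * snd q + 2 * int j * snd q)"
    using mult_displ_index[OF displ_carrier i j] displ_index[OF i k(2)] k by (simp add: k_def)
  also have "\<dots> = tau d powi (symp p q) * (if int i = (int j + (fst p + fst q)) mod int d
      then tau d powi ((fst p + fst q) * (snd p + snd q) + 2 * int j * (snd p + snd q)) else 0)"
  proof -
    have "tau d powi ((fst p * snd p + 2 * k * snd p) + (fst q * snd q + 2 * int j * snd q))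
        = tau d powi (symp p q + ((fst p + fst q) * (snd p + snd q) + 2 * int j * (snd p + snd q)))"
      by (rule tau_power_int_cong[OF assms, where n = "- ((int j + fst q) div int d) * snd p"])
        (simp add: ke symp_def algebra_simps)
    then show ?thesis using cond by (simp add: tau_power_int_add)
  qed
  also have "\<dots> = (tau d powi (symp p q) \<cdot>\<^sub>m displ d (fst p + fst q, snd p + snd q)) $$ (i,j)"
    using i j by (simp add: displ_index)
  finally show "(displ d p * displ d q) $$ (i,j)
      = (tau d powi (symp p q) \<cdot>\<^sub>m displ d (fst p + fst q, snd p + snd q)) $$ (i,j)" .
qed auto

lemma mat_adjoint_displ:
  assumes "d > 0"
  shows "mat_adjoint (displ d p) = displ d (- fst p, - snd p)"
proof (rule eq_matI)
  fix i j assume "i < dim_row (displ d (- fst p, - snd p))" "j < dim_col (displ d (- fst p, - snd p))"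
  then have i: "i < d" and j: "j < d" by auto
  have cond: "(int j = (int i + fst p) mod int d) = (int i = (int j + - fst p) mod int d)"
    using eq_add_mod_iff_eq_diff_mod[OF j i, of "fst p"] by simp
  have "mat_adjoint (displ d p) $$ (i,j)
      = (if int j = (int i + fst p) mod int d then tau d powi (- (fst p * snd p + 2 * int i * snd p)) else 0)"
    using i j assms by (simp add: displ_index cnj_tau_power_int)
  also have "\<dots> = displ d (- fst p, - snd p) $$ (i,j)"
  proof (cases "int j = (int i + fst p) mod int d")
    case True
    then have j_eq: "int j = int i + fst p - int d * ((int i + fst p) div int d)"
      by (simp add: minus_mult_div_eq_mod)
    have "tau d powi (- (fst p * snd p + 2 * int i * snd p)) = tau d powi (fst p * snd p + 2 * int j * (- snd p))"
      by (rule tau_power_int_cong[OF assms, where n = "- ((int i + fst p) div int d) * snd p"])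
        (simp add: j_eq algebra_simps)
    then show ?thesis using True cond i j by (simp add: displ_index)
  qed (use cond i j in \<open>simp add: displ_index\<close>)
  finally show "mat_adjoint (displ d p) $$ (i,j) = displ d (- fst p, - snd p) $$ (i,j)" .
qed auto

text \<open>Reducing \<open>p\<close> modulo \<open>d\<close> changes the exponent of \<open>\<tau>\<close> in the entries of \<open>D\<^sub>p\<close> by a
  multiple of \<open>d\<close>; since \<open>\<tau>\<^sup>d = (-1)\<^sup>d\<^sup>+\<^sup>1\<close>, this is the sign \<open>s\<^sub>p\<close>.\<close>

lemma tau_power_int_red:
  assumes "d > 0"
  shows "tau d powi (fst p * snd p + 2 * int j * snd p)
    = sgn_s d p * tau d powi (fst (red d p) * snd (red d p) + 2 * int j * snd (red d p))"
proof -
  define r1 r2 m1 m2 where "r1 = fst p mod int d" and "r2 = snd p mod int d"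
    and "m1 = fst p div int d" and "m2 = snd p div int d"
  have p1: "fst p = r1 + int d * m1" and p2: "snd p = r2 + int d * m2"
    unfolding r1_def r2_def m1_def m2_def by simp_all
  define X where "X = r1 * m2 + m1 * r2 + int d * m1 * m2 + 2 * int j * m2"
  have "tau d powi (fst p * snd p + 2 * int j * snd p) = tau d powi (r1 * r2 + 2 * int j * r2) * tau d powi (int d * X)"
    by (simp add: p1 p2 X_def algebra_simps flip: tau_power_int_add)
  also have "tau d powi (int d * X) = (-1) powi ((int d + 1) * X)"
    by (rule tau_power_int_d_mult[OF assms])
  also have "(-1) powi ((int d + 1) * X) = sgn_s d p"
  proof (cases "odd d")
    case True
    then obtain e where e: "int d + 1 = 2 * e" by (metis even_plus_one_iff even_of_nat_iff evenE)
    then have "(-1 :: complex) powi ((int d + 1) * X) = (-1) powi 0"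
      by (intro minus_one_power_int_cong[where n = "e * X"]) simp
    then show ?thesis using True by (simp add: sgn_s_def)
  next
    case False
    then obtain e where e: "int d = 2 * e" by (metis even_of_nat_iff evenE)
    have "red d p = (r1, r2)" by (simp add: red_def r1_def r2_def)
    then have "symp p (red d p) = int d * (m2 * r1 - m1 * r2)"
      by (simp add: symp_def p1 p2 algebra_simps)
    then have "symp p (red d p) div int d = m2 * r1 - m1 * r2" using assms by simp
    moreover have "(-1 :: complex) powi ((int d + 1) * X) = (-1) powi (m2 * r1 - m1 * r2)"
      by (rule minus_one_power_int_cong[where n = "e * X + m1 * r2 + e * m1 * m2 + int j * m2"])
        (simp add: X_def e algebra_simps)
    ultimately show ?thesis using False by (simp add: sgn_s_def)
  qed
  finally show ?thesis by (simp add: red_def r1_def r2_def mult.commute)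
qed

lemma displ_red: "d > 0 \<Longrightarrow> displ d p = sgn_s d p \<cdot>\<^sub>m displ d (red d p)"
  by (rule eq_matI) (auto simp: displ_index red_def mod_add_right_eq tau_power_int_red[unfolded red_def])

lemma displ_zero: "d > 0 \<Longrightarrow> displ d (0,0) = 1\<^sub>m d"
  by (rule eq_matI) (auto simp: displ_index)

lemma displ_unitary:
  assumes "d > 0"
  shows "displ d p * mat_adjoint (displ d p) = 1\<^sub>m d"
    and "mat_adjoint (displ d p) * displ d p = 1\<^sub>m d"
  using assms by (simp_all add: mat_adjoint_displ displ_mult displ_zero symp_def)

lemma mat_trace_displ:
  assumes "\<not> (int d dvd fst p \<and> int d dvd snd p)"
  shows "mat_trace (displ d p) = 0"
proof (cases "int d dvd fst p")
  case True
  show ?thesis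
  proof (cases "d = 0")
    case False
    then have "d > 0" and nd: "\<not> int d dvd snd p" using assms True by auto
    have "mat_trace (displ d p) = (\<Sum>i<d. tau d powi (fst p * snd p) * tau d powi (2 * snd p * int i))"
      unfolding mat_trace_def using True
      by (intro sum.cong) (auto simp: displ_index mod_add_right_eq[symmetric] tau_power_int_add algebra_simps)
    also have "\<dots> = tau d powi (fst p * snd p) * (\<Sum>k\<in>{0..<int d}. tau d powi (2 * snd p * k))"
      by (simp add: sum_distrib_left image_int_atLeastLessThan[of 0 d, simplified, symmetric] sum.reindex
        atLeast0LessThan)
    also have "\<dots> = 0" using sum_tau_power_int_double_mult[OF \<open>d > 0\<close> nd] by simp
    finally show ?thesis .
  qed (simp add: mat_trace_def)
next
  case False
  have "\<not> int i = (int i + fst p) mod int d" for i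
  proof
    assume "int i = (int i + fst p) mod int d"
    then have "int d dvd fst p"
      using dvd_minus_mod[of "int d" "int i + fst p"] by simp
    then show False using False by simp
  qed
  then show ?thesis by (simp add: mat_trace_def displ_index)
qed

lemma mat_trace_displ_mult_adjoint:
  assumes p: "p \<in> Zd2 d" and q: "q \<in> Zd2 d"
  shows "mat_trace (displ d p * mat_adjoint (displ d q)) = (if p = q then of_nat d else 0)"
proof (cases "p = q")
  case False
  have "d > 0" using p by (auto simp: Zd2_def)
  then have "displ d p * mat_adjoint (displ d q)
      = tau d powi (symp p (- fst q, - snd q)) \<cdot>\<^sub>m displ d (fst p - fst q, snd p - snd q)"
    by (simp add: mat_adjoint_displ displ_mult)
  moreover have "mat_trace (displ d (fst p - fst q, snd p - snd q)) = 0"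
    using Zd2_diff_not_dvd[OF p q False] by (intro mat_trace_displ) simp
  ultimately show ?thesis using False by (simp add: mat_trace_smult[of _ d])
qed (use p displ_unitary(1) in \<open>auto simp: Zd2_def\<close>)

lemma mat_trace_displ_mult_mult_adjoint:
  assumes p: "p \<in> Zd2 d" and q: "q \<in> Zd2 d" and r: "r \<in> Zd2 d"
  shows "mat_trace (displ d p * displ d q * mat_adjoint (displ d r))
    = tau d powi (symp p q) * sgn_s d (fst p + fst q, snd p + snd q) * (if r = oplus d p q then of_nat d else 0)"
proof -
  have "d > 0" using p by (auto simp: Zd2_def)
  let ?c = "tau d powi (symp p q) * sgn_s d (fst p + fst q, snd p + snd q)"
  have "displ d p * displ d q * mat_adjoint (displ d r)
      = ?c \<cdot>\<^sub>m (displ d (oplus d p q) * mat_adjoint (displ d r))"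
    using \<open>d > 0\<close> displ_red[OF \<open>d > 0\<close>, of "(fst p + fst q, snd p + snd q)"]
    by (simp add: displ_mult smult_smult_mat mult_smult_assoc_mat[of _ d d _ d] oplus_def)
  then have "mat_trace (displ d p * displ d q * mat_adjoint (displ d r))
      = ?c * mat_trace (displ d (oplus d p q) * mat_adjoint (displ d r))"
    using mat_trace_smult[OF mult_carrier_mat[OF displ_carrier mat_adjoint_carrier[OF displ_carrier]]]
    by simp
  also have "\<dots> = ?c * (if oplus d p q = r then of_nat d else 0)"
    using red_in_Zd2[OF \<open>d > 0\<close>] r by (simp add: mat_trace_displ_mult_adjoint oplus_def)
  finally show ?thesis by auto
qed

lemma displ_conj:
  assumes "d > 0"
  shows "displ d r * displ d q * mat_adjoint (displ d r) = tau d powi (2 * symp r q) \<cdot>\<^sub>m displ d q"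
proof -
  have "displ d r * displ d q * mat_adjoint (displ d r)
      = tau d powi (symp r q) \<cdot>\<^sub>m (displ d (fst r + fst q, snd r + snd q) * displ d (- fst r, - snd r))"
    using assms by (simp add: mat_adjoint_displ displ_mult mult_smult_assoc_mat[of _ d d _ d])
  also have "\<dots> = tau d powi (2 * symp r q) \<cdot>\<^sub>m displ d q"
    using assms by (simp add: displ_mult smult_smult_mat symp_def algebra_simps flip: tau_power_int_add)
  finally show ?thesis .
qed


section \<open>Linear combinations of displacement operators\<close>

definition displ_comb :: "nat \<Rightarrow> (int \<times> int \<Rightarrow> complex) \<Rightarrow> (int \<times> int) set \<Rightarrow> complex mat" where
  "displ_comb d a S = msum d (\<lambda>q. a q \<cdot>\<^sub>m displ d q) S"

lemma displ_comb_carrier [simp]: "displ_comb d a S \<in> carrier_mat d d"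
  by (simp add: displ_comb_def)

lemma displ_comb_index:
  "i < d \<Longrightarrow> j < d \<Longrightarrow> displ_comb d a S $$ (i,j) = (\<Sum>q\<in>S. a q * displ d q $$ (i,j))"
  by (simp add: displ_comb_def msum_index)

lemma mat_trace_displ_comb:
  assumes "S \<subseteq> Zd2star d"
  shows "mat_trace (displ_comb d a S) = 0"
proof -
  have "mat_trace (displ_comb d a S) = (\<Sum>q\<in>S. a q * mat_trace (displ d q))"
    unfolding displ_comb_def by (simp add: mat_trace_msum mat_trace_smult[of _ d])
  also have "\<dots> = 0"
  proof (rule sum.neutral, rule ballI)
    fix q assume "q \<in> S"
    then have "\<not> (int d dvd fst q \<and> int d dvd snd q)" using assms Zd2star_not_dvd by blast
    then show "a q * mat_trace (displ d q) = 0" by (simp add: mat_trace_displ)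
  qed
  finally show ?thesis .
qed

lemma mat_adjoint_displ_comb:
  "mat_adjoint (displ_comb d a S) = msum d (\<lambda>q. cnj (a q) \<cdot>\<^sub>m mat_adjoint (displ d q)) S"
  unfolding displ_comb_def by (simp add: mat_adjoint_msum mat_adjoint_smult)

lemma mat_trace_adjoint_displ_comb_mult:
  assumes S: "S \<subseteq> Zd2 d"
  shows "mat_trace (mat_adjoint (displ_comb d a S) * displ_comb d b S) = of_nat d * (\<Sum>q\<in>S. cnj (a q) * b q)"
proof -
  let ?F = "\<lambda>p. cnj (a p) \<cdot>\<^sub>m mat_adjoint (displ d p)" and ?G = "\<lambda>q. b q \<cdot>\<^sub>m displ d q"
  have "mat_adjoint (displ_comb d a S) * displ_comb d b S = msum d (\<lambda>p. ?F p * displ_comb d b S) S"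
    unfolding mat_adjoint_displ_comb by (rule msum_mult) auto
  also have "\<dots> = msum d (\<lambda>p. msum d (\<lambda>q. ?F p * ?G q) S) S"
    unfolding displ_comb_def by (rule msum_cong, rule mult_msum) auto
  finally have "mat_trace (mat_adjoint (displ_comb d a S) * displ_comb d b S)
      = (\<Sum>p\<in>S. \<Sum>q\<in>S. mat_trace (?F p * ?G q))"
    by (simp add: mat_trace_msum, intro sum.cong refl mat_trace_msum) auto
  moreover have "mat_trace (?F p * ?G q) = cnj (a p) * b q * (if p = q then of_nat d else 0)"
    if "p \<in> S" "q \<in> S" for p q
  proof -
    have "?F p * ?G q = (cnj (a p) * b q) \<cdot>\<^sub>m (mat_adjoint (displ d p) * displ d q)"
      by (rule smult_mult_smult_mat) auto
    then have "mat_trace (?F p * ?G q) = cnj (a p) * b q * mat_trace (mat_adjoint (displ d p) * displ d q)"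
      using mat_trace_smult[OF mult_carrier_mat[OF mat_adjoint_carrier[OF displ_carrier] displ_carrier]]
      by simp
    also have "mat_trace (mat_adjoint (displ d p) * displ d q) = mat_trace (displ d q * mat_adjoint (displ d p))"
      by (rule mat_trace_mult_comm) auto
    also have "\<dots> = (if q = p then of_nat d else 0)"
      using that S by (intro mat_trace_displ_mult_adjoint) auto
    finally show ?thesis by auto
  qed
  ultimately have "mat_trace (mat_adjoint (displ_comb d a S) * displ_comb d b S)
      = (\<Sum>p\<in>S. \<Sum>q\<in>S. cnj (a p) * b q * (if p = q then of_nat d else 0))"
    by simp
  also have "\<dots> = of_nat d * (\<Sum>q\<in>S. cnj (a q) * b q)"
    using finite_subset[OF S Zd2_finite]
    by (simp add: if_distrib[of "\<lambda>x. _ * x"] sum_distrib_left mult_ac cong: if_cong)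
  finally show ?thesis .
qed

lemma mat_trace_displ_comb_mult_mult_adjoint:
  "mat_trace (displ_comb d a S * displ_comb d b S * mat_adjoint (displ_comb d h S))
    = (\<Sum>p\<in>S. \<Sum>q\<in>S. \<Sum>r\<in>S. a p * b q * cnj (h r) * mat_trace (displ d p * displ d q * mat_adjoint (displ d r)))"
proof -
  let ?F = "\<lambda>p. a p \<cdot>\<^sub>m displ d p" and ?G = "\<lambda>q. b q \<cdot>\<^sub>m displ d q"
    and ?H = "\<lambda>r. cnj (h r) \<cdot>\<^sub>m mat_adjoint (displ d r)"
  have "displ_comb d a S * displ_comb d b S = msum d (\<lambda>p. msum d (\<lambda>q. ?F p * ?G q) S) S"
    unfolding displ_comb_def by (subst msum_mult, simp, simp, rule msum_cong, rule mult_msum) auto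
  then have "displ_comb d a S * displ_comb d b S * mat_adjoint (displ_comb d h S)
      = msum d (\<lambda>p. msum d (\<lambda>q. ?F p * ?G q) S * msum d ?H S) S"
    unfolding mat_adjoint_displ_comb by (simp, intro msum_mult) auto
  also have "\<dots> = msum d (\<lambda>p. msum d (\<lambda>q. ?F p * ?G q * msum d ?H S) S) S"
    by (rule msum_cong, rule msum_mult) auto
  also have "\<dots> = msum d (\<lambda>p. msum d (\<lambda>q. msum d (\<lambda>r. ?F p * ?G q * ?H r) S) S) S"
    by (rule msum_cong, rule msum_cong, rule mult_msum) auto
  finally have expand: "displ_comb d a S * displ_comb d b S * mat_adjoint (displ_comb d h S)
      = msum d (\<lambda>p. msum d (\<lambda>q. msum d (\<lambda>r. ?F p * ?G q * ?H r) S) S) S" .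
  have "mat_trace (displ_comb d a S * displ_comb d b S * mat_adjoint (displ_comb d h S))
      = (\<Sum>p\<in>S. \<Sum>q\<in>S. \<Sum>r\<in>S. mat_trace (?F p * ?G q * ?H r))"
    unfolding expand
    by (subst mat_trace_msum, simp, rule sum.cong[OF refl], subst mat_trace_msum, simp,
        rule sum.cong[OF refl], subst mat_trace_msum) auto
  moreover have "mat_trace (?F p * ?G q * ?H r)
      = a p * b q * cnj (h r) * mat_trace (displ d p * displ d q * mat_adjoint (displ d r))" for p q r
  proof -
    have "?F p * ?G q = (a p * b q) \<cdot>\<^sub>m (displ d p * displ d q)"
      by (rule smult_mult_smult_mat) auto
    then have "?F p * ?G q * ?H r = (a p * b q * cnj (h r)) \<cdot>\<^sub>m (displ d p * displ d q * mat_adjoint (displ d r))"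
      by (simp only:) (rule smult_mult_smult_mat, auto)
    then show ?thesis
      using mat_trace_smult[OF mult_carrier_mat[OF mult_carrier_mat[OF displ_carrier displ_carrier]
          mat_adjoint_carrier[OF displ_carrier]]]
      by simp
  qed
  ultimately show ?thesis by simp
qed

lemma displ_conj_displ_comb:
  assumes "d > 0"
  shows "displ d r * displ_comb d a S * mat_adjoint (displ d r)
    = displ_comb d (\<lambda>q. a q * tau d powi (2 * symp r q)) S"
proof -
  have "displ d r * (a q \<cdot>\<^sub>m displ d q) * mat_adjoint (displ d r)
      = (a q * tau d powi (2 * symp r q)) \<cdot>\<^sub>m displ d q" for q
    by (simp only: mult_smult_distrib[OF displ_carrier displ_carrier]
        mult_smult_assoc_mat[OF mult_carrier_mat[OF displ_carrier displ_carrier] mat_adjoint_carrier[OF displ_carrier]])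
      (simp add: displ_conj[OF assms] smult_smult_mat)
  moreover have "displ d r * displ_comb d a S * mat_adjoint (displ d r)
      = msum d (\<lambda>q. displ d r * (a q \<cdot>\<^sub>m displ d q) * mat_adjoint (displ d r)) S"
    unfolding displ_comb_def by (subst mult_msum, simp, simp, rule msum_mult) auto
  ultimately show ?thesis
    unfolding displ_comb_def by simp
qed


section \<open>The operator \<open>B\<close>\<close>

definition Bop_coeff :: "nat \<Rightarrow> (int \<times> int \<Rightarrow> real) \<Rightarrow> int \<times> int \<Rightarrow> complex" where
  "Bop_coeff d theta q = cis (theta q) / complex_of_real (sqrt (real d + 1))"

lemma Bop_eq_displ_comb: "Bop d theta = displ_comb d (Bop_coeff d theta) (Zd2star d)"
  unfolding Bop_def displ_comb_def
  by (subst smult_msum) (auto intro!: msum_cong simp: smult_smult_mat Bop_coeff_def cis_conv_exp)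

lemma Bop_carrier [simp]: "Bop d theta \<in> carrier_mat d d"
  by (simp add: Bop_eq_displ_comb)

lemma cnj_Bop_coeff_mult_Bop_coeff: "cnj (Bop_coeff d theta q) * Bop_coeff d theta q = 1 / (of_nat d + 1)"
proof -
  have "(complex_of_real (sqrt (real d + 1)))\<^sup>2 = of_nat d + 1"
    by (simp flip: of_real_power)
  then show ?thesis
    by (simp add: Bop_coeff_def cis_cnj cis_mult power2_eq_square)
qed

lemma mat_trace_Bop: "mat_trace (Bop d theta) = 0"
  unfolding Bop_eq_displ_comb by (rule mat_trace_displ_comb) simp

text \<open>Since \<open>D\<^sub>q\<^sup>\<dagger> = s\<^sub>-\<^sub>q D\<^bsub>bar d q\<^esub>\<close>, the symmetry condition on \<open>\<theta>\<close> says exactly that \<open>B\<^sup>\<dagger>\<close>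
  has the same coefficients as \<open>B\<close>.\<close>

lemma Bop_hermitian:
  assumes "d > 0"
    and sym: "\<forall>q\<in>Zd2star d. exp (\<i> * complex_of_real (theta (bar d q)))
               = sgn_s d (- fst q, - snd q) * exp (- \<i> * complex_of_real (theta q))"
  shows "mat_adjoint (Bop d theta) = Bop d theta"
proof -
  let ?b = "Bop_coeff d theta"
  have "mat_adjoint (Bop d theta) = msum d (\<lambda>q. cnj (?b q) \<cdot>\<^sub>m mat_adjoint (displ d q)) (Zd2star d)"
    unfolding Bop_eq_displ_comb by (rule mat_adjoint_displ_comb)
  also have "\<dots> = msum d (\<lambda>q. ?b (bar d q) \<cdot>\<^sub>m displ d (bar d q)) (Zd2star d)"
  proof (rule msum_cong)
    fix q assume q: "q \<in> Zd2star d"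
    have "mat_adjoint (displ d q) = sgn_s d (- fst q, - snd q) \<cdot>\<^sub>m displ d (bar d q)"
      using assms(1) by (simp add: mat_adjoint_displ displ_red[OF assms(1), of "(- fst q, - snd q)"] bar_def)
    moreover have "cis (theta (bar d q)) = sgn_s d (- fst q, - snd q) * exp (- \<i> * complex_of_real (theta q))"
      using sym q by (simp add: cis_conv_exp)
    moreover have "exp (- \<i> * complex_of_real (theta q)) = cnj (cis (theta q))"
      by (simp only: cis_cnj) (simp add: cis_conv_exp)
    ultimately show "cnj (?b q) \<cdot>\<^sub>m mat_adjoint (displ d q) = ?b (bar d q) \<cdot>\<^sub>m displ d (bar d q)"
      by (simp add: smult_smult_mat Bop_coeff_def mult_ac)
  qed
  also have "\<dots> = msum d (\<lambda>q. ?b q \<cdot>\<^sub>m displ d q) (bar d ` Zd2star d)"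
    using bij_betw_bar by (intro msum_reindex[symmetric]) (simp add: bij_betw_def)
  also have "bar d ` Zd2star d = Zd2star d"
    using bij_betw_bar by (simp add: bij_betw_def)
  also have "msum d (\<lambda>q. ?b q \<cdot>\<^sub>m displ d q) (Zd2star d) = Bop d theta"
    by (simp add: Bop_eq_displ_comb displ_comb_def)
  finally show ?thesis .
qed

lemma mat_trace_Bop_square:
  assumes "d > 0" and herm: "mat_adjoint (Bop d theta) = Bop d theta"
  shows "mat_trace (Bop d theta * Bop d theta) = of_real (real d * (real d - 1))"
proof -
  have "mat_trace (Bop d theta * Bop d theta) = mat_trace (mat_adjoint (Bop d theta) * Bop d theta)"
    using herm by simp
  also have "\<dots> = of_nat d * (of_nat (d\<^sup>2 - 1) / (of_nat d + 1))"
    unfolding Bop_eq_displ_comb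
    by (simp add: mat_trace_adjoint_displ_comb_mult Zd2star_subset cnj_Bop_coeff_mult_Bop_coeff card_Zd2star)
  also have "\<dots> = of_real (real d * (real (d\<^sup>2 - 1) / (real d + 1)))"
    by simp
  also have "real (d\<^sup>2 - 1) = (real d - 1) * (real d + 1)"
    using assms(1) by (simp add: of_nat_diff power2_eq_square algebra_simps)
  finally show ?thesis by simp
qed

lemma sum_Zd2star_if_oplus:
  "(\<Sum>p\<in>Zd2star d. \<Sum>q\<in>Zd2star d. if oplus d p q \<in> Zd2star d then g p q else 0)
    = (\<Sum>(p,q) \<in> {(p,q). p \<in> Zd2star d \<and> q \<in> Zd2star d \<and> oplus d p q \<in> Zd2star d}. g p q)"
proof -
  have "{(p,q). p \<in> Zd2star d \<and> q \<in> Zd2star d \<and> oplus d p q \<in> Zd2star d}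
      = {x \<in> Zd2star d \<times> Zd2star d. oplus d (fst x) (snd x) \<in> Zd2star d}" by auto
  then show ?thesis
    by (simp add: sum.inter_filter sum.cartesian_product split_def)
qed

lemma exp_i_add_diff: "exp (\<i> * complex_of_real (a + b - c)) = cis a * cis b * cnj (cis c)"
  by (simp only: cis_conv_exp[symmetric]) (simp add: cis_cnj cis_mult)

lemma mat_trace_Bop_cube:
  assumes "d > 0" and herm: "mat_adjoint (Bop d theta) = Bop d theta"
  shows "mat_trace (Bop d theta * Bop d theta * Bop d theta)
    = of_real (real d / sqrt (real d + 1) ^ 3)
      * (\<Sum>(p,q) \<in> {(p,q). p \<in> Zd2star d \<and> q \<in> Zd2star d \<and> oplus d p q \<in> Zd2star d}.
          sgn_s d (fst p + fst q, snd p + snd q) * tau d powi (symp p q)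
          * exp (\<i> * complex_of_real (theta p + theta q - theta (oplus d p q))))"
proof -
  let ?Z = "Zd2star d" and ?b = "Bop_coeff d theta" and ?c = "of_real (real d / sqrt (real d + 1) ^ 3) :: complex"
  let ?g = "\<lambda>p q. sgn_s d (fst p + fst q, snd p + snd q) * tau d powi (symp p q)
      * exp (\<i> * complex_of_real (theta p + theta q - theta (oplus d p q)))"
  have coeff: "?b p * ?b q * cnj (?b (oplus d p q)) * (tau d powi (symp p q)
      * sgn_s d (fst p + fst q, snd p + snd q) * of_nat d) = ?c * ?g p q" for p q
  proof -
    have "complex_of_real (sqrt (real d + 1) * sqrt (real d + 1)) = of_nat d + 1"
      by simp
    then have sq: "complex_of_real (sqrt (real d + 1)) * complex_of_real (sqrt (real d + 1)) = of_nat d + 1"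
      by (simp only: of_real_mult)
    have "?b p * ?b q * cnj (?b (oplus d p q))
        = cis (theta p) * cis (theta q) * cnj (cis (theta (oplus d p q))) / of_real (sqrt (real d + 1) ^ 3)"
      using sq by (simp add: Bop_coeff_def power3_eq_cube)
    then show ?thesis using sq unfolding exp_i_add_diff by simp
  qed
  have "mat_trace (Bop d theta * Bop d theta * Bop d theta)
      = mat_trace (Bop d theta * Bop d theta * mat_adjoint (Bop d theta))"
    using herm by simp
  also have "\<dots> = (\<Sum>p\<in>?Z. \<Sum>q\<in>?Z. \<Sum>r\<in>?Z. ?b p * ?b q * cnj (?b r) * (tau d powi (symp p q)
      * sgn_s d (fst p + fst q, snd p + snd q) * (if r = oplus d p q then of_nat d else 0)))"
    unfolding Bop_eq_displ_comb mat_trace_displ_comb_mult_mult_adjoint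
    by (intro sum.cong refl, subst mat_trace_displ_mult_mult_adjoint) (auto intro: subsetD[OF Zd2star_subset])
  also have "\<dots> = (\<Sum>p\<in>?Z. \<Sum>q\<in>?Z. if oplus d p q \<in> ?Z then ?c * ?g p q else 0)"
    by (intro sum.cong refl) (simp add: if_distrib[of "\<lambda>x. _ * x"] sum.delta' coeff cong: if_cong)
  also have "\<dots> = ?c * (\<Sum>p\<in>?Z. \<Sum>q\<in>?Z. if oplus d p q \<in> ?Z then ?g p q else 0)"
    by (simp add: sum_distrib_left if_distrib[of "\<lambda>x. _ * x"] cong: if_cong)
  finally show ?thesis by (simp only: sum_Zd2star_if_oplus)
qed


section \<open>The displaced operators form a SIC-POVM\<close>

lemma displ_conj_smult_one_plus:
  assumes "d > 0" and "M \<in> carrier_mat d d"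
  shows "displ d r * (c \<cdot>\<^sub>m (1\<^sub>m d + M)) * mat_adjoint (displ d r)
    = c \<cdot>\<^sub>m (1\<^sub>m d + displ d r * M * mat_adjoint (displ d r))"
  using assms displ_unitary(1)[OF assms(1)]
  by (simp add: unitary_conj_smult[of _ d] unitary_conj_one_plus[of _ d])

lemma Eop_eq_displ_conj:
  assumes "d > 0"
  shows "Eop d theta r = (1 / of_nat d) \<cdot>\<^sub>m
    (displ d r * ((1 / of_nat d) \<cdot>\<^sub>m (1\<^sub>m d + Bop d theta)) * mat_adjoint (displ d r))"
  using assms by (simp add: Eop_def displ_conj_smult_one_plus smult_smult_mat power2_eq_square)

lemma mat_trace_displ_conj_Bop: "d > 0 \<Longrightarrow> mat_trace (displ d r * Bop d theta * mat_adjoint (displ d r)) = 0"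
  using mat_trace_unitary_conj[OF displ_carrier Bop_carrier displ_unitary(2)] mat_trace_Bop by simp

lemma rank_one_projector_if_sic:
  assumes "d > 0" and "rank_one_sic_povm d (Eop d theta)"
  shows "rank_one_projector d ((1 / of_nat d) \<cdot>\<^sub>m (1\<^sub>m d + Bop d theta))"
proof -
  obtain P where P: "\<forall>r\<in>Zd2 d. rank_one_projector d (P r) \<and> Eop d theta r = (1 / of_nat d) \<cdot>\<^sub>m P r"
    using assms(2) unfolding rank_one_sic_povm_def by blast
  then have P0: "rank_one_projector d (P (0,0))" and E0: "Eop d theta (0,0) = (1 / of_nat d) \<cdot>\<^sub>m P (0,0)"
    using zero_in_Zd2[OF assms(1)] by auto
  have Pi: "(1 / of_nat d) \<cdot>\<^sub>m (1\<^sub>m d + Bop d theta) \<in> carrier_mat d d" by simp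
  have "Eop d theta (0,0) = (1 / of_nat d) \<cdot>\<^sub>m ((1 / of_nat d) \<cdot>\<^sub>m (1\<^sub>m d + Bop d theta))"
    using Eop_eq_displ_conj[OF assms(1), of theta "(0,0)"]
    by (simp only: displ_zero[OF assms(1)] mat_adjoint_one left_mult_one_mat[OF Pi] right_mult_one_mat[OF Pi])
  then have "(1 / of_nat d) \<cdot>\<^sub>m P (0,0) = (1 / of_nat d) \<cdot>\<^sub>m ((1 / of_nat d) \<cdot>\<^sub>m (1\<^sub>m d + Bop d theta))"
    by (simp only: E0)
  then have "P (0,0) = (1 / of_nat d) \<cdot>\<^sub>m (1\<^sub>m d + Bop d theta)"
    by (rule smult_mat_cancel[rotated]) (use assms(1) in simp)
  with P0 show ?thesis by simp
qed

text \<open>Conjugating \<open>B\<close> by \<open>D\<^sub>r\<close> multiplies the coefficient of \<open>D\<^sub>q\<close> by \<open>\<tau>\<^sup>2\<^sup>\<langle>\<^sup>r\<^sup>,\<^sup>q\<^sup>\<rangle>\<close>; by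
  orthogonality of the \<open>D\<^sub>q\<close>, \<open>tr (B\<^sub>r B\<^sub>s)\<close> becomes a character sum over \<open>(\<int>\<^sub>d\<^sup>2)\<^sup>*\<close>.\<close>

lemma mat_trace_displ_conj_Bop_mult:
  assumes herm: "mat_adjoint (Bop d theta) = Bop d theta"
    and r: "r \<in> Zd2 d" and s: "s \<in> Zd2 d" and "r \<noteq> s"
  shows "mat_trace ((displ d r * Bop d theta * mat_adjoint (displ d r))
      * (displ d s * Bop d theta * mat_adjoint (displ d s))) = - of_nat d / of_nat (d + 1)"
proof -
  have "d > 0" using r by (auto simp: Zd2_def)
  let ?b = "Bop_coeff d theta" and ?B = "\<lambda>r. displ d r * Bop d theta * mat_adjoint (displ d r)"
  let ?a = "\<lambda>r q. ?b q * tau d powi (2 * symp r q)"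
  have Br: "?B r = displ_comb d (?a r) (Zd2star d)" for r
    unfolding Bop_eq_displ_comb by (rule displ_conj_displ_comb[OF \<open>d > 0\<close>])
  have "mat_adjoint (?B r) = ?B r"
    using herm by (simp add: unitary_conj_adjoint[of _ d])
  then have "mat_trace (?B r * ?B s) = mat_trace (mat_adjoint (?B r) * ?B s)" by simp
  also have "\<dots> = of_nat d * (\<Sum>q\<in>Zd2star d. cnj (?a r q) * ?a s q)"
    unfolding Br by (rule mat_trace_adjoint_displ_comb_mult[OF Zd2star_subset])
  also have "\<dots> = of_nat d * (\<Sum>q\<in>Zd2star d. tau d powi (2 * symp q (fst r - fst s, snd r - snd s)) / (of_nat d + 1))"
  proof -
    have "cnj (?a r q) * ?a s q = tau d powi (2 * symp q (fst r - fst s, snd r - snd s)) / (of_nat d + 1)" for q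
    proof -
      have "cnj (?a r q) * ?a s q = (cnj (?b q) * ?b q) * (tau d powi (- (2 * symp r q)) * tau d powi (2 * symp s q))"
        using cnj_tau_power_int[OF \<open>d > 0\<close>] by (simp add: mult_ac)
      also have "tau d powi (- (2 * symp r q)) * tau d powi (2 * symp s q)
          = tau d powi (2 * symp q (fst r - fst s, snd r - snd s))"
        by (simp add: symp_def algebra_simps flip: tau_power_int_add)
      finally show ?thesis by (simp add: cnj_Bop_coeff_mult_Bop_coeff)
    qed
    then show ?thesis by simp
  qed
  also have "\<dots> = - of_nat d / of_nat (d + 1)"
    using sum_Zd2star_tau_symp[OF \<open>d > 0\<close>, of "(fst r - fst s, snd r - snd s)"]
      Zd2_diff_not_dvd[OF r s \<open>r \<noteq> s\<close>]
    by (simp add: sum_divide_distrib[symmetric] add.commute)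
  finally show ?thesis .
qed

lemma msum_displ_conj_Bop:
  assumes "d > 0"
  shows "msum d (\<lambda>r. displ d r * Bop d theta * mat_adjoint (displ d r)) (Zd2 d) = 0\<^sub>m d d"
proof (rule eq_matI)
  fix i j assume "i < dim_row (0\<^sub>m d d :: complex mat)" "j < dim_col (0\<^sub>m d d :: complex mat)"
  then have ij: "i < d" "j < d" by auto
  have "msum d (\<lambda>r. displ d r * Bop d theta * mat_adjoint (displ d r)) (Zd2 d) $$ (i,j)
      = (\<Sum>r\<in>Zd2 d. \<Sum>q\<in>Zd2star d. Bop_coeff d theta q * displ d q $$ (i,j) * tau d powi (2 * symp r q))"
    using ij
    by (simp add: msum_index Bop_eq_displ_comb displ_conj_displ_comb[OF assms] displ_comb_index mult_ac)
  also have "\<dots> = (\<Sum>q\<in>Zd2star d. Bop_coeff d theta q * displ d q $$ (i,j) * (\<Sum>r\<in>Zd2 d. tau d powi (2 * symp r q)))"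
    by (subst sum.swap) (simp add: sum_distrib_left)
  also have "\<dots> = 0"
    using sum_Zd2_tau_symp[OF assms] Zd2star_not_dvd by (simp add: sum.neutral)
  finally show "msum d (\<lambda>r. displ d r * Bop d theta * mat_adjoint (displ d r)) (Zd2 d) $$ (i,j)
      = 0\<^sub>m d d $$ (i,j)" using ij by simp
qed auto

lemma mat_trace_displ_conj_projector_mult:
  assumes herm: "mat_adjoint (Bop d theta) = Bop d theta"
    and r: "r \<in> Zd2 d" and s: "s \<in> Zd2 d" and "r \<noteq> s"
  defines "Proj \<equiv> (1 / of_nat d) \<cdot>\<^sub>m (1\<^sub>m d + Bop d theta)"
  shows "mat_trace ((displ d r * Proj * mat_adjoint (displ d r)) * (displ d s * Proj * mat_adjoint (displ d s)))
    = 1 / of_nat (d + 1)"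
proof -
  have "d > 0" using r by (auto simp: Zd2_def)
  define Bd where "Bd r = displ d r * Bop d theta * mat_adjoint (displ d r)" for r
  have BC: "Bd r \<in> carrier_mat d d" for r
    unfolding Bd_def by (intro mult_carrier_mat) auto
  have "(displ d r * Proj * mat_adjoint (displ d r)) * (displ d s * Proj * mat_adjoint (displ d s))
      = ((1 / of_nat d) * (1 / of_nat d)) \<cdot>\<^sub>m ((1\<^sub>m d + Bd r) * (1\<^sub>m d + Bd s))"
    unfolding Proj_def displ_conj_smult_one_plus[OF \<open>d > 0\<close> Bop_carrier] Bd_def[symmetric]
    using BC by (intro smult_mult_smult_mat[of _ d d _ d]) auto
  moreover have "(1\<^sub>m d + Bd r) * (1\<^sub>m d + Bd s) \<in> carrier_mat d d"
    using BC by (intro mult_carrier_mat[of _ d d _ d] add_carrier_mat) auto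
  ultimately have "mat_trace ((displ d r * Proj * mat_adjoint (displ d r)) * (displ d s * Proj * mat_adjoint (displ d s)))
      = (1 / of_nat d) * (1 / of_nat d) * mat_trace ((1\<^sub>m d + Bd r) * (1\<^sub>m d + Bd s))"
    by (simp only: mat_trace_smult)
  also have "\<dots> = (1 / of_nat d) * (1 / of_nat d) * (of_nat d - of_nat d / of_nat (d + 1))"
    using mat_trace_one_plus_mult[OF BC BC] mat_trace_displ_conj_Bop_mult[OF herm r s \<open>r \<noteq> s\<close>]
      mat_trace_displ_conj_Bop[OF \<open>d > 0\<close>]
    by (simp add: Bd_def)
  also have "\<dots> = 1 / of_nat (d + 1)"
  proof -
    have "(1 + of_nat d :: complex) \<noteq> 0"
      by (metis add.commute of_nat_Suc of_nat_eq_0_iff Suc_neq_Zero)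
    then show ?thesis using \<open>d > 0\<close> by (simp add: field_simps)
  qed
  finally show ?thesis .
qed

lemma msum_Eop:
  assumes "d > 0"
  shows "msum d (Eop d theta) (Zd2 d) = 1\<^sub>m d"
proof (rule eq_matI)
  fix i j assume "i < dim_row (1\<^sub>m d :: complex mat)" "j < dim_col (1\<^sub>m d :: complex mat)"
  then have ij: "i < d" "j < d" by auto
  define Bd where "Bd r = displ d r * Bop d theta * mat_adjoint (displ d r)" for r
  have E: "Eop d theta r $$ (i,j) = (1 / of_nat (d\<^sup>2)) * ((if i = j then 1 else 0) + Bd r $$ (i,j))" for r
  proof -
    have "Bd r \<in> carrier_mat d d" unfolding Bd_def by (intro mult_carrier_mat) auto
    then show ?thesis unfolding Eop_def Bd_def[symmetric] using ij by simp
  qed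
  have z: "(\<Sum>r\<in>Zd2 d. Bd r $$ (i,j)) = 0"
    using msum_displ_conj_Bop[OF assms, of theta, folded Bd_def] ij
    by (metis msum_index index_zero_mat(1))
  have "msum d (Eop d theta) (Zd2 d) $$ (i,j)
      = (\<Sum>r\<in>Zd2 d. (1 / of_nat (d\<^sup>2)) * ((if i = j then 1 else 0) + Bd r $$ (i,j)))"
    using ij by (simp only: msum_index E)
  also have "\<dots> = (1 / of_nat (d\<^sup>2)) * (of_nat (d\<^sup>2) * (if i = j then 1 else 0) + (\<Sum>r\<in>Zd2 d. Bd r $$ (i,j)))"
    by (cases "i = j") (simp_all add: sum_divide_distrib[symmetric] sum.distrib card_Zd2)
  finally show "msum d (Eop d theta) (Zd2 d) $$ (i,j) = 1\<^sub>m d $$ (i,j)"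
    using ij assms z by simp
qed auto

lemma sic_if_rank_one_projector:
  assumes "d > 0" and herm: "mat_adjoint (Bop d theta) = Bop d theta"
    and proj: "rank_one_projector d ((1 / of_nat d) \<cdot>\<^sub>m (1\<^sub>m d + Bop d theta))"
  shows "rank_one_sic_povm d (Eop d theta)"
proof -
  let ?Pi = "(1 / of_nat d) \<cdot>\<^sub>m (1\<^sub>m d + Bop d theta)"
  define P where "P r = displ d r * ?Pi * mat_adjoint (displ d r)" for r
  have "mat_trace ?Pi = 1"
    using assms(1) by (simp add: mat_trace_smult[of _ d] mat_trace_add[of _ d] mat_trace_Bop)
  then have "rank_one_projector d (P r)" for r
    using proj unfolding P_def
    by (intro rank_one_projector_unitary_conj[OF displ_carrier displ_unitary(2)[OF assms(1)]])
      (auto simp: rank_one_projector_def)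
  moreover have "Eop d theta r = (1 / of_nat d) \<cdot>\<^sub>m P r" for r
    unfolding P_def by (rule Eop_eq_displ_conj[OF assms(1)])
  moreover have "mat_trace (P r * P s) = 1 / of_nat (d + 1)" if "r \<in> Zd2 d" "s \<in> Zd2 d" "r \<noteq> s" for r s
    unfolding P_def by (rule mat_trace_displ_conj_projector_mult[OF herm that])
  ultimately show ?thesis
    using msum_Eop[OF assms(1)] unfolding rank_one_sic_povm_def by blast
qed

lemma powr_three_halves: "x > 0 \<Longrightarrow> x powr (3/2) = sqrt x ^ 3"
proof -
  assume "x > 0"
  have "x powr (3/2) = x powr (1 + 1/2)" by simp
  also have "\<dots> = x powr 1 * x powr (1/2)" by (rule powr_add)
  also have "\<dots> = x * sqrt x" using \<open>x > 0\<close> by (simp add: powr_half_sqrt)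
  also have "\<dots> = sqrt x ^ 3" using \<open>x > 0\<close> by (simp add: power3_eq_cube)
  finally show ?thesis .
qed

theorem mainTheorem7:
  fixes d :: nat and theta :: "int \<times> int \<Rightarrow> real"
  assumes d2: "d \<ge> 2"
    and sym: "\<forall>q\<in>Zd2star d. exp (\<i> * complex_of_real (theta (bar d q)))
               = sgn_s d (- fst q, - snd q) * exp (- \<i> * complex_of_real (theta q))"
  defines "LHS \<equiv> (\<Sum>(p,q) \<in> {(p,q). p \<in> Zd2star d \<and> q \<in> Zd2star d \<and> oplus d p q \<in> Zd2star d}.
               sgn_s d (fst p + fst q, snd p + snd q) * tau d powi (symp p q)
               * exp (\<i> * complex_of_real (theta p + theta q - theta (oplus d p q))))"
    and "bound \<equiv> (real d - 1) * (real d - 2) * (real d + 1) powr (3/2)"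
  shows "Im LHS = 0 \<and> Re LHS \<le> bound
     \<and> (Re LHS = bound \<longleftrightarrow> rank_one_projector d ((1 / of_nat d) \<cdot>\<^sub>m (1\<^sub>m d + Bop d theta)))
     \<and> (Re LHS = bound \<longleftrightarrow> rank_one_sic_povm d (Eop d theta))"
proof -
  let ?B = "Bop d theta"
  define k where "k = real d / sqrt (real d + 1) ^ 3"
  have "d > 0" using d2 by simp
  have herm: "mat_adjoint ?B = ?B" by (rule Bop_hermitian[OF \<open>d > 0\<close> sym])
  note cube = trace_cube_le_if_traceless[OF \<open>d > 0\<close> Bop_carrier herm mat_trace_Bop
      mat_trace_Bop_square[OF \<open>d > 0\<close> herm]]
  have tr3: "mat_trace (?B * ?B * ?B) = of_real k * LHS"
    unfolding LHS_def k_def by (rule mat_trace_Bop_cube[OF \<open>d > 0\<close> herm])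
  have "k > 0" using \<open>d > 0\<close> by (simp add: k_def)
  have kb: "k * bound = real d * (real d - 1) * (real d - 2)"
    by (simp add: k_def bound_def powr_three_halves)
  have ReT: "Re (mat_trace (?B * ?B * ?B)) = k * Re LHS" using tr3 by simp
  have "Im LHS = 0"
    using Im_mat_trace_cube_hermitian[OF Bop_carrier herm] tr3 \<open>k > 0\<close> by simp
  moreover have "Re LHS \<le> bound \<longleftrightarrow> Re (mat_trace (?B * ?B * ?B)) \<le> real d * (real d - 1) * (real d - 2)"
    and "Re LHS = bound \<longleftrightarrow> Re (mat_trace (?B * ?B * ?B)) = real d * (real d - 1) * (real d - 2)"
    using ReT kb \<open>k > 0\<close> by (metis mult_le_cancel_left_pos, metis mult_cancel_left less_irrefl)
  ultimately show ?thesis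
    using cube sic_if_rank_one_projector[OF \<open>d > 0\<close> herm] rank_one_projector_if_sic[OF \<open>d > 0\<close>]
    by blast
qed

end
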